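(* Consider the K-AVG algorithm (described in the context) run with a fixed stepsize $\gamma_n=\bar\gamma>0$ and a fixed batch size $B_n=\bar B$ for all $n$, where for some constant $0<\delta<1$, $$1\ \ge\ \frac{L^2\bar\gamma^2(K+1)(K-2)}{2}+L\bar\gamma K \qquad\text{and}\qquad 1-\delta\ \ge\ L^2\bar\gamma^2 .$$ Then for every $N\in\mathbb{N}$, $$\frac{1}{N}\,\mathbb{E}\sum_{j=1}^N\big\|\nabla F(\widetilde w_j)\big\|_2^2\ \le\ \frac{2\big(F(\widetilde w_1)-F^*\big)}{N(K-1+\delta)\bar\gamma}+\frac{LK\bar\gamma M}{\bar B(K-1+\delta)}\Big(\frac{K}{P}+\frac{L(2K-1)(K-1)\bar\gamma}{6}\Big).$$
   Context: Let $F:\mathbb{R}^d\to\mathbb{R}$ be continuously differentiable with $L$-Lipschitz gradient ($L>0$): $\|\nabla F(w)-\nabla F(w')\|_2\le L\|w-w'\|_2$ for all $w,w'$. Let $\xi$ be a random variable and $(w,\xi)\mapsto\nabla F(w;\xi)\in\mathbb{R}^d$ a stochastic gradient satisfying, for every fixed $w$, $\mathbb{E}_\xi\nabla F(w;\xi)=\nabla F(w)$ and $\mathbb{E}_\xi\|\nabla F(w;\xi)\|_2^2-\|\mathbb{E}_\xi\nabla F(w;\xi)\|_2^2\le M$ for a constant $M\ge0$. K-AVG algorithm with $P\ge1$ processors, delay $K\ge1$, stepsizes $\gamma_n>0$ and batch sizes $B_n\ge1$: start from a deterministic $\widetilde w_1\in\mathbb{R}^d$. For $n=1,2,\dots$: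 each processor $j=1,\dots,P$ sets $w^j_{n,0}=\widetilde w_n$ and for $k=1,\dots,K$ updates $w^j_{n,k}=w^j_{n,k-1}-\frac{\gamma_n}{B_n}\sum_{s=1}^{B_n}\nabla F(w^j_{n,k-1};\xi^j_{n,k,s})$; then $\widetilde w_{n+1}=\frac1P\sum_{j=1}^P w^j_{n,K}$. All samples $\xi^j_{n,k,s}$ (over all $n,j,k,s$) are i.i.d. copies of $\xi$. It is assumed that there is a scalar $F^*$ with $F\ge F^*$ on an open set containing all iterates (in particular $F(\widetilde w_n)\ge F^*$ for all $n$). $\mathbb{E}$ denotes total expectation over all samples. *)

theory Defs
  imports "HOL-Probability.Probability"
begin

text \<open>K-AVG iterates. G is the stochastic gradient, gam the stepsizes, B the batch sizes,
  xi n j k s is the sample used in round n, processor j, local step k, batch element s.\<close>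

primrec kavg_local ::
  "('a::real_vector \<Rightarrow> 'x \<Rightarrow> 'a) \<Rightarrow> (nat \<Rightarrow> real) \<Rightarrow> (nat \<Rightarrow> nat)
   \<Rightarrow> (nat \<Rightarrow> nat \<Rightarrow> nat \<Rightarrow> nat \<Rightarrow> 'b \<Rightarrow> 'x)
   \<Rightarrow> nat \<Rightarrow> nat \<Rightarrow> 'a \<Rightarrow> nat \<Rightarrow> 'b \<Rightarrow> 'a" where
  "kavg_local G gam B xi n j w 0 \<omega> = w"
| "kavg_local G gam B xi n j w (Suc k) \<omega> =
     (let v = kavg_local G gam B xi n j w k \<omega>
      in v - (gam n / real (B n)) *\<^sub>R (\<Sum>s=1..B n. G v (xi n j (Suc k) s \<omega>)))"

text \<open>kavg_aux ... m = tilde w_(m+1).\<close>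
primrec kavg_aux ::
  "('a::real_vector \<Rightarrow> 'x \<Rightarrow> 'a) \<Rightarrow> (nat \<Rightarrow> real) \<Rightarrow> (nat \<Rightarrow> nat)
   \<Rightarrow> (nat \<Rightarrow> nat \<Rightarrow> nat \<Rightarrow> nat \<Rightarrow> 'b \<Rightarrow> 'x)
   \<Rightarrow> nat \<Rightarrow> nat \<Rightarrow> 'a \<Rightarrow> nat \<Rightarrow> 'b \<Rightarrow> 'a" where
  "kavg_aux G gam B xi P K w1 0 \<omega> = w1"
| "kavg_aux G gam B xi P K w1 (Suc m) \<omega> =
     (1 / real P) *\<^sub>R (\<Sum>j=1..P. kavg_local G gam B xi (Suc m) j (kavg_aux G gam B xi P K w1 m \<omega>) K \<omega>)"

definition kavg_tilde ::
  "('a::real_vector \<Rightarrow> 'x \<Rightarrow> 'a) \<Rightarrow> (nat \<Rightarrow> real) \<Rightarrow> (nat \<Rightarrow> nat)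
   \<Rightarrow> (nat \<Rightarrow> nat \<Rightarrow> nat \<Rightarrow> nat \<Rightarrow> 'b \<Rightarrow> 'x)
   \<Rightarrow> nat \<Rightarrow> nat \<Rightarrow> 'a \<Rightarrow> nat \<Rightarrow> 'b \<Rightarrow> 'a" where
  "kavg_tilde G gam B xi P K w1 n \<omega> = kavg_aux G gam B xi P K w1 (n - 1) \<omega>"

end

theory Submission
  imports Defs "HOL-Probability.Probability"
begin

text \<open>Fix a round starting at \<open>x\<close>, let \<open>g\<^sub>j\<^sub>,\<^sub>t\<close> be the \<open>t\<close>-th minibatch gradient of
  processor \<open>j\<close> and \<open>u\<^sub>t\<close> their mean over \<open>j\<close>. The descent lemma gives
  \<open>F(x') + \<parallel>\<nabla>F(x)\<parallel>\<^sup>2/(2L) \<le> F(x) + \<Sum>\<^sub>t Q\<^sub>t\<close> for the next averaged iterate \<open>x'\<close>, where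
  \<open>Q\<^sub>t = L\<gamma>\<^sup>2K/2 \<parallel>u\<^sub>t - \<nabla>F(x)/(L\<gamma>K)\<parallel>\<^sup>2\<close>. To bound \<open>E \<Sum>\<^sub>t Q\<^sub>t\<close>, use
  \<open>\<Psi>\<^sub>t = \<Sum>\<^sub>i\<^sub><\<^sub>t Q\<^sub>i + \<beta>\<^sub>t mean\<^sub>j \<Sum>\<^sub>i\<^sub><\<^sub>t \<parallel>g\<^sub>j\<^sub>,\<^sub>i\<parallel>\<^sup>2\<close> with \<open>\<beta>\<^sub>K = 0\<close>. Given the first \<open>t\<close>
  local steps, the fresh centred minibatch noise contributes at most
  \<open>L\<gamma>\<^sup>2K/2 \<cdot> M/(PB) + \<beta>\<^sub>t\<^sub>+\<^sub>1 M/B\<close> to \<open>E \<Psi>\<^sub>t\<^sub>+\<^sub>1 - \<Psi>\<^sub>t\<close>, while the drift of the local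
  iterates away from \<open>x\<close>, which by Lipschitz continuity costs \<open>L\<^sup>2\<gamma>\<^sup>2 t \<Sum>\<^sub>i\<^sub><\<^sub>t \<parallel>g\<^sub>j\<^sub>,\<^sub>i\<parallel>\<^sup>2\<close>, is paid for by the decrease
  \<open>\<beta>\<^sub>t - \<beta>\<^sub>t\<^sub>+\<^sub>1\<close> under the first step-size condition. This bounds the expected decrease of \<open>F\<close>
  per round; telescoping over the rounds, whose samples are independent, gives the theorem.\<close>

lemma descent_lemma:
  fixes F :: "'a::real_inner \<Rightarrow> real"
  assumes deriv: "\<And>w. (F has_derivative (\<lambda>h. gradF w \<bullet> h)) (at w)"
    and lip: "\<And>w w'. norm (gradF w - gradF w') \<le> L * norm (w - w')"
  shows "F (x + d) \<le> F x + gradF x \<bullet> d + L / 2 * (norm d)\<^sup>2"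
proof -
  define \<psi> where "\<psi> t = F (x + t *\<^sub>R d) - t * (gradF x \<bullet> d) - L / 2 * t\<^sup>2 * (norm d)\<^sup>2" for t
  define \<psi>' where "\<psi>' t = gradF (x + t *\<^sub>R d) \<bullet> d - gradF x \<bullet> d - L * t * (norm d)\<^sup>2" for t
  have der: "DERIV \<psi> t :> \<psi>' t" for t
  proof -
    have 1: "((\<lambda>t. x + t *\<^sub>R d) has_derivative (\<lambda>h. h *\<^sub>R d)) (at t)"
      by (auto intro!: derivative_eq_intros)
    have 2: "((\<lambda>t. F (x + t *\<^sub>R d)) has_derivative (\<lambda>h. gradF (x + t *\<^sub>R d) \<bullet> (h *\<^sub>R d))) (at t)"
      using has_derivative_compose[OF 1 deriv] by simp
    have 3: "((\<lambda>t. F (x + t *\<^sub>R d)) has_real_derivative (gradF (x + t *\<^sub>R d) \<bullet> d)) (at t)"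
      using 2 unfolding has_field_derivative_def by (simp add: mult.commute[of _ "gradF (x + t *\<^sub>R d) \<bullet> d"])
    show ?thesis unfolding \<psi>_def \<psi>'_def
      by (auto intro!: derivative_eq_intros 3 simp: power2_eq_square algebra_simps)
  qed
  have nonpos: "\<psi>' t \<le> 0" if "0 \<le> t" for t
  proof -
    have "(gradF (x + t *\<^sub>R d) - gradF x) \<bullet> d \<le> norm (gradF (x + t *\<^sub>R d) - gradF x) * norm d"
      by (rule norm_cauchy_schwarz)
    also have "\<dots> \<le> (L * norm (t *\<^sub>R d)) * norm d"
      using lip[of "x + t *\<^sub>R d" x] by (intro mult_right_mono) auto
    also have "\<dots> = L * t * (norm d)\<^sup>2" using that by (simp add: power2_eq_square)
    finally show ?thesis unfolding \<psi>'_def by (simp add: inner_diff_left)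
  qed
  obtain z where z: "0 < z" "z < 1" "\<psi> 1 - \<psi> 0 = (1 - 0) * \<psi>' z"
    using MVT2[of 0 1 \<psi> \<psi>'] der by auto
  then have "\<psi> 1 \<le> \<psi> 0" using nonpos[of z] by simp
  then show ?thesis unfolding \<psi>_def by simp
qed

lemma norm_sum_power2_le:
  fixes a :: "'i \<Rightarrow> 'a::real_normed_vector"
  shows "(norm (\<Sum>i\<in>S. a i))\<^sup>2 \<le> real (card S) * (\<Sum>i\<in>S. (norm (a i))\<^sup>2)"
proof -
  have "(norm (\<Sum>i\<in>S. a i))\<^sup>2 \<le> (\<Sum>i\<in>S. norm (a i))\<^sup>2"
    by (intro power_mono norm_sum) auto
  also have "\<dots> \<le> (\<Sum>i\<in>S. (norm (a i))\<^sup>2) * card S"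
    by (rule sum_squared_le_sum_of_squares)
  finally show ?thesis by (simp add: mult.commute)
qed

lemma norm_average_power2_le:
  fixes a :: "'i \<Rightarrow> 'a::real_normed_vector"
  assumes "finite S" "S \<noteq> {}"
  shows "(norm ((1 / real (card S)) *\<^sub>R (\<Sum>i\<in>S. a i)))\<^sup>2 \<le> (1 / real (card S)) * (\<Sum>i\<in>S. (norm (a i))\<^sup>2)"
proof -
  have c: "real (card S) > 0" using assms by auto
  have "(norm ((1 / real (card S)) *\<^sub>R (\<Sum>i\<in>S. a i)))\<^sup>2 = (norm (\<Sum>i\<in>S. a i))\<^sup>2 / (real (card S))\<^sup>2"
    using c by (simp add: power_divide)
  also have "\<dots> \<le> real (card S) * (\<Sum>i\<in>S. (norm (a i))\<^sup>2) / (real (card S))\<^sup>2"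
    by (intro divide_right_mono norm_sum_power2_le) auto
  also have "\<dots> = (1 / real (card S)) * (\<Sum>i\<in>S. (norm (a i))\<^sup>2)"
    using c by (simp add: power2_eq_square)
  finally show ?thesis .
qed

lemma (in prob_space) nn_integral_indep_var:
  assumes ind: "indep_var S X T Y"
    and f: "f \<in> borel_measurable (S \<Otimes>\<^sub>M T)"
  shows "(\<integral>\<^sup>+\<omega>. f (X \<omega>, Y \<omega>) \<partial>M) = (\<integral>\<^sup>+\<omega>. (\<integral>\<^sup>+\<omega>'. f (X \<omega>, Y \<omega>') \<partial>M) \<partial>M)"
proof -
  from ind[unfolded indep_var_distribution_eq]
  have X: "X \<in> measurable M S" and Y: "Y \<in> measurable M T"
    and eq: "distr M S X \<Otimes>\<^sub>M distr M T Y = distr M (S \<Otimes>\<^sub>M T) (\<lambda>x. (X x, Y x))" by auto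
  interpret PX: prob_space "distr M S X" by (rule prob_space_distr[OF X])
  interpret PY: prob_space "distr M T Y" by (rule prob_space_distr[OF Y])
  have f': "f \<in> borel_measurable (distr M S X \<Otimes>\<^sub>M distr M T Y)"
    using f by (simp add: measurable_cong_sets[OF sets_pair_measure_cong[OF sets_distr sets_distr] refl])
  have "(\<integral>\<^sup>+\<omega>. f (X \<omega>, Y \<omega>) \<partial>M) = (\<integral>\<^sup>+z. f z \<partial>distr M (S \<Otimes>\<^sub>M T) (\<lambda>x. (X x, Y x)))"
    using X Y f by (subst nn_integral_distr) (auto intro: measurable_Pair)
  also have "\<dots> = (\<integral>\<^sup>+z. f z \<partial>(distr M S X \<Otimes>\<^sub>M distr M T Y))"
    by (simp add: eq)
  also have "\<dots> = (\<integral>\<^sup>+a. (\<integral>\<^sup>+b. f (a, b) \<partial>distr M T Y) \<partial>distr M S X)"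
    by (rule PY.nn_integral_fst[OF f', symmetric])
  also have "\<dots> = (\<integral>\<^sup>+\<omega>. (\<integral>\<^sup>+b. f (X \<omega>, b) \<partial>distr M T Y) \<partial>M)"
    using PY.borel_measurable_nn_integral_fst[OF f'] X
    by (subst nn_integral_distr) (auto simp: measurable_cong_sets[OF sets_distr refl])
  also have "\<dots> = (\<integral>\<^sup>+\<omega>. (\<integral>\<^sup>+\<omega>'. f (X \<omega>, Y \<omega>') \<partial>M) \<partial>M)"
  proof (intro nn_integral_cong)
    fix \<omega> assume "\<omega> \<in> space M"
    then have xs: "X \<omega> \<in> space S" using X by (auto simp: measurable_space)
    have "(\<lambda>b. f (X \<omega>, b)) \<in> borel_measurable T"
      by (rule measurable_Pair2[OF f xs])
    then show "(\<integral>\<^sup>+b. f (X \<omega>, b) \<partial>distr M T Y) = (\<integral>\<^sup>+\<omega>'. f (X \<omega>, Y \<omega>') \<partial>M)"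
      using Y by (subst nn_integral_distr) auto
  qed
  finally show ?thesis .
qed

lemma (in prob_space) AE_indep_var:
  assumes ind: "indep_var S X T Y"
    and Qm: "{z \<in> space (S \<Otimes>\<^sub>M T). Q z} \<in> sets (S \<Otimes>\<^sub>M T)"
    and all: "\<And>\<omega>. \<omega> \<in> space M \<Longrightarrow> Q (X \<omega>, Y \<omega>)"
  shows "AE \<omega> in M. AE \<omega>' in M. Q (X \<omega>, Y \<omega>')"
proof -
  from ind[unfolded indep_var_distribution_eq]
  have X: "X \<in> measurable M S" and Y: "Y \<in> measurable M T"
    and eq: "distr M S X \<Otimes>\<^sub>M distr M T Y = distr M (S \<Otimes>\<^sub>M T) (\<lambda>x. (X x, Y x))" by auto
  interpret PX: prob_space "distr M S X" by (rule prob_space_distr[OF X])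
  interpret PY: prob_space "distr M T Y" by (rule prob_space_distr[OF Y])
  interpret PXY: pair_prob_space "distr M S X" "distr M T Y" ..
  have XY: "(\<lambda>x. (X x, Y x)) \<in> measurable M (S \<Otimes>\<^sub>M T)" using X Y by (rule measurable_Pair)
  have "AE z in distr M (S \<Otimes>\<^sub>M T) (\<lambda>x. (X x, Y x)). Q z"
    using all by (subst AE_distr_iff[OF XY Qm]) (auto intro: AE_I2)
  then have "AE z in distr M S X \<Otimes>\<^sub>M distr M T Y. Q z" unfolding eq .
  then have "AE a in distr M S X. AE b in distr M T Y. Q (a, b)" by (rule PXY.AE_pair)
  then have "AE \<omega> in M. AE b in distr M T Y. Q (X \<omega>, b)" by (rule AE_distrD[OF X])
  then show ?thesis
    by (rule eventually_mono) (rule AE_distrD[OF Y])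
qed

lemma nn_integral_norm_add_centered_power2:
  fixes c :: "'x \<Rightarrow> 'a::euclidean_space"
  assumes "prob_space D" and ci: "integrable D c" and csq: "integrable D (\<lambda>y. (norm (c y))\<^sup>2)"
    and c0: "(\<integral>y. c y \<partial>D) = 0"
  shows "(\<integral>\<^sup>+y. ennreal ((norm (b + \<alpha> *\<^sub>R c y))\<^sup>2) \<partial>D) = ennreal ((norm b)\<^sup>2 + \<alpha>\<^sup>2 * (\<integral>y. (norm (c y))\<^sup>2 \<partial>D))"
proof -
  interpret prob_space D by fact
  have eq: "(norm (b + \<alpha> *\<^sub>R c y))\<^sup>2 = (norm b)\<^sup>2 + (2 * \<alpha>) * (b \<bullet> c y) + \<alpha>\<^sup>2 * (norm (c y))\<^sup>2" for y
    unfolding power2_norm_eq_inner by (simp add: inner_add_left inner_add_right inner_commute algebra_simps power2_eq_square)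
  have int: "integrable D (\<lambda>y. (norm b)\<^sup>2 + (2 * \<alpha>) * (b \<bullet> c y) + \<alpha>\<^sup>2 * (norm (c y))\<^sup>2)"
    by (intro Bochner_Integration.integrable_add integrable_mult_right integrable_inner_right ci csq finite_measure.integrable_const finite_measure_axioms)
  have "(\<integral>\<^sup>+y. ennreal ((norm (b + \<alpha> *\<^sub>R c y))\<^sup>2) \<partial>D)
      = (\<integral>\<^sup>+y. ennreal ((norm b)\<^sup>2 + (2 * \<alpha>) * (b \<bullet> c y) + \<alpha>\<^sup>2 * (norm (c y))\<^sup>2) \<partial>D)"
    by (simp add: eq)
  also have "\<dots> = ennreal (\<integral>y. (norm b)\<^sup>2 + (2 * \<alpha>) * (b \<bullet> c y) + \<alpha>\<^sup>2 * (norm (c y))\<^sup>2 \<partial>D)"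
    using int by (intro nn_integral_eq_integral) (auto simp: eq[symmetric])
  also have "(\<integral>y. (norm b)\<^sup>2 + (2 * \<alpha>) * (b \<bullet> c y) + \<alpha>\<^sup>2 * (norm (c y))\<^sup>2 \<partial>D)
      = (norm b)\<^sup>2 + (2 * \<alpha>) * (b \<bullet> (\<integral>y. c y \<partial>D)) + \<alpha>\<^sup>2 * (\<integral>y. (norm (c y))\<^sup>2 \<partial>D)"
  proof -
    have i1: "integrable D (\<lambda>y. (2 * \<alpha>) * (b \<bullet> c y))" "integrable D (\<lambda>y. \<alpha>\<^sup>2 * (norm (c y))\<^sup>2)"
      "integrable D (\<lambda>y. (norm b)\<^sup>2)"
      by (intro integrable_mult_right integrable_inner_right ci csq finite_measure.integrable_const finite_measure_axioms)+
    have i2: "integrable D (\<lambda>y. (norm b)\<^sup>2 + (2 * \<alpha>) * (b \<bullet> c y))"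
      by (intro Bochner_Integration.integrable_add i1)
    show ?thesis
      using i1 i2 ci by (simp add: Bochner_Integration.integral_add prob_space)
  qed
  finally show ?thesis using c0 by simp
qed

lemma nn_integral_affine_le:
  fixes f0 :: "'b \<Rightarrow> real" and f :: "'j \<Rightarrow> 'b \<Rightarrow> real"
  assumes J: "finite J" and c0: "0 \<le> c0" and w0: "0 \<le> w0" and w: "\<And>j. j \<in> J \<Longrightarrow> 0 \<le> w j"
    and f0m: "f0 \<in> borel_measurable N" and fm: "\<And>j. j \<in> J \<Longrightarrow> f j \<in> borel_measurable N"
    and f0n: "\<And>\<omega>. 0 \<le> f0 \<omega>" and fn: "\<And>j \<omega>. j \<in> J \<Longrightarrow> 0 \<le> f j \<omega>"
    and b0: "0 \<le> b0" and b: "\<And>j. j \<in> J \<Longrightarrow> 0 \<le> b j"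
    and i0: "(\<integral>\<^sup>+\<omega>. ennreal (f0 \<omega>) \<partial>N) \<le> ennreal b0"
    and i: "\<And>j. j \<in> J \<Longrightarrow> (\<integral>\<^sup>+\<omega>. ennreal (f j \<omega>) \<partial>N) \<le> ennreal (b j)"
    and one: "emeasure N (space N) = 1"
  shows "(\<integral>\<^sup>+\<omega>. ennreal (c0 + w0 * f0 \<omega> + (\<Sum>j\<in>J. w j * f j \<omega>)) \<partial>N)
         \<le> ennreal (c0 + w0 * b0 + (\<Sum>j\<in>J. w j * b j))"
proof -
  have eq: "ennreal (c0 + w0 * f0 \<omega> + (\<Sum>j\<in>J. w j * f j \<omega>))
      = ennreal c0 + ennreal w0 * ennreal (f0 \<omega>) + (\<Sum>j\<in>J. ennreal (w j) * ennreal (f j \<omega>))" for \<omega>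
    using c0 w0 w f0n fn
    by (simp add: ennreal_plus sum_nonneg ennreal_mult sum_ennreal[symmetric] del: sum_ennreal)
  have "(\<integral>\<^sup>+\<omega>. ennreal (c0 + w0 * f0 \<omega> + (\<Sum>j\<in>J. w j * f j \<omega>)) \<partial>N)
      = (\<integral>\<^sup>+\<omega>. ennreal c0 + ennreal w0 * ennreal (f0 \<omega>) + (\<Sum>j\<in>J. ennreal (w j) * ennreal (f j \<omega>)) \<partial>N)"
    by (simp add: eq)
  also have "\<dots> = ennreal c0 + ennreal w0 * (\<integral>\<^sup>+\<omega>. ennreal (f0 \<omega>) \<partial>N)
      + (\<Sum>j\<in>J. ennreal (w j) * (\<integral>\<^sup>+\<omega>. ennreal (f j \<omega>) \<partial>N))"
    using f0m fm one
    by (simp add: nn_integral_add nn_integral_sum nn_integral_cmult)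
  also have "\<dots> \<le> ennreal c0 + ennreal w0 * ennreal b0 + (\<Sum>j\<in>J. ennreal (w j) * ennreal (b j))"
    by (intro add_mono mult_left_mono sum_mono i0 i order_refl) auto
  also have "\<dots> = ennreal (c0 + w0 * b0 + (\<Sum>j\<in>J. w j * b j))"
    using c0 w0 w b0 b
    by (simp add: ennreal_plus sum_nonneg ennreal_mult sum_ennreal[symmetric] del: sum_ennreal)
  finally show ?thesis .
qed

lemma ennreal_le_diff_of_add_le:
  assumes le: "x + ennreal d \<le> ennreal a" and d: "0 \<le> d"
  shows "x \<le> ennreal (a - d)"
proof -
  have "x \<noteq> \<top>" using le by (auto simp: top_unique)
  then obtain r where r: "x = ennreal r" "0 \<le> r" by (cases x) auto
  then have "ennreal (r + d) \<le> ennreal a" using le d by (simp add: ennreal_plus)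
  then have "r + d \<le> a \<or> r + d \<le> 0" by (auto simp: ennreal_le_iff2)
  then show ?thesis
  proof
    assume "r + d \<le> 0"
    then have "r = 0" using r d by linarith
    then show ?thesis using r by simp
  qed (use r in \<open>auto intro: ennreal_leI\<close>)
qed

lemma sum_Suc_times_self: "(\<Sum>t<m. real (Suc t) * (real (Suc t) - 1)) = real (m + 1) * real m * (real m - 1) / 3"
  by (induction m) (simp_all add: field_simps)

section \<open>The K-AVG iterates along sample paths\<close>

type_synonym kavg_index = "nat \<times> nat \<times> nat \<times> nat"

locale kavg =
  fixes F :: "'a::euclidean_space \<Rightarrow> real"
    and gradF :: "'a \<Rightarrow> 'a"
    and L M gbar :: real
    and P K Bbar :: nat
    and D :: "'x measure"
    and G :: "'a \<Rightarrow> 'x \<Rightarrow> 'a"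
    and \<Omega> :: "'b measure"
    and xi :: "nat \<Rightarrow> nat \<Rightarrow> nat \<Rightarrow> nat \<Rightarrow> 'b \<Rightarrow> 'x"
    and \<delta> :: real
  assumes deriv: "\<And>w. (F has_derivative (\<lambda>h. gradF w \<bullet> h)) (at w)"
    and L_pos: "L > 0"
    and lipschitz: "\<And>w w'. norm (gradF w - gradF w') \<le> L * norm (w - w')"
    and D_prob: "prob_space D"
    and G_meas: "(\<lambda>(w, x). G w x) \<in> borel_measurable (borel \<Otimes>\<^sub>M D)"
    and G_int: "\<And>w. integrable D (G w)"
    and G_sq_int: "\<And>w. integrable D (\<lambda>x. (norm (G w x))\<^sup>2)"
    and unbiased: "\<And>w. (\<integral>x. G w x \<partial>D) = gradF w"
    and M_nonneg: "M \<ge> 0"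
    and variance: "\<And>w. (\<integral>x. (norm (G w x))\<^sup>2 \<partial>D) - (norm (\<integral>x. G w x \<partial>D))\<^sup>2 \<le> M"
    and P_pos: "P \<ge> 1" and K_pos: "K \<ge> 1"
    and gbar_pos: "gbar > 0" and Bbar_pos: "Bbar \<ge> 1"
    and prob: "prob_space \<Omega>"
    and xi_meas: "\<And>n j k s. 1 \<le> n \<Longrightarrow> j \<in> {1..P} \<Longrightarrow> k \<in> {1..K} \<Longrightarrow> s \<in> {1..Bbar} \<Longrightarrow>
        xi n j k s \<in> measurable \<Omega> D"
    and xi_indep: "prob_space.indep_vars \<Omega> (\<lambda>_. D) (\<lambda>(n, j, k, s). xi n j k s)
                     {(n, j, k, s). 1 \<le> n \<and> j \<in> {1..P} \<and> k \<in> {1..K} \<and> s \<in> {1..Bbar}}"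
    and xi_distr: "\<And>n j k s. 1 \<le> n \<Longrightarrow> j \<in> {1..P} \<Longrightarrow> k \<in> {1..K} \<Longrightarrow> s \<in> {1..Bbar} \<Longrightarrow>
        distr \<Omega> D (xi n j k s) = D"
    and delta: "0 < \<delta>" "\<delta> < 1"
    and cond1: "1 \<ge> L\<^sup>2 * gbar\<^sup>2 * (real K + 1) * (real K - 2) / 2 + L * gbar * real K"
    and cond2: "1 - \<delta> \<ge> L\<^sup>2 * gbar\<^sup>2"
begin

lemma Bbar_real: "real Bbar > 0" using Bbar_pos by auto

lemma P_real: "real P > 0" using P_pos by auto

lemma K_real: "real K \<ge> 1" using K_pos by auto

lemma emeasure_space_Omega [simp]: "emeasure \<Omega> (space \<Omega>) = 1"
  using prob by (rule prob_space.emeasure_space_1)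

lemma continuous_F: "continuous_on UNIV F"
  using deriv by (intro continuous_at_imp_continuous_on ballI has_derivative_continuous) auto

lemma continuous_gradF: "continuous_on UNIV gradF"
proof (rule lipschitz_on_continuous_on)
  show "lipschitz_on L UNIV gradF"
    using lipschitz L_pos by (intro lipschitz_onI) (auto simp: dist_norm)
qed

lemma L_gbar_K_le_1: "L * gbar * real K \<le> 1"
proof (cases "K \<ge> 2")
  case True
  then have "(real K + 1) * (real K - 2) \<ge> 0" by auto
  then have "L\<^sup>2 * gbar\<^sup>2 * (real K + 1) * (real K - 2) / 2 \<ge> 0"
    by (simp add: mult.assoc)
  then show ?thesis using cond1 by linarith
next
  case False
  then have K1: "K = 1" using K_pos by auto
  have "(L * gbar)\<^sup>2 < 1\<^sup>2" using cond2 delta by (simp add: power_mult_distrib)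
  then have "L * gbar < 1" using L_pos gbar_pos by (smt (verit) power_mono)
  then show ?thesis using K1 by simp
qed

definition sample_index :: "(kavg_index) set" where
  "sample_index = {(n, j, k, s). 1 \<le> n \<and> j \<in> {1..P} \<and> k \<in> {1..K} \<and> s \<in> {1..Bbar}}"

definition sample :: "kavg_index \<Rightarrow> 'b \<Rightarrow> 'x" where
  "sample i \<omega> = (case i of (n, j, k, s) \<Rightarrow> xi n j k s \<omega>)"

abbreviation sample_path :: "'b \<Rightarrow> kavg_index \<Rightarrow> 'x" where
  "sample_path \<omega> \<equiv> (\<lambda>i. sample i \<omega>)"

lemma sample_simp[simp]: "sample (n, j, k, s) = xi n j k s"
  by (simp add: fun_eq_iff sample_def)

lemma measurable_sample: "i \<in> sample_index \<Longrightarrow> sample i \<in> measurable \<Omega> D"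
  using xi_meas by (auto simp: sample_index_def)

lemma indep_vars_sample: "prob_space.indep_vars \<Omega> (\<lambda>_. D) sample sample_index"
proof -
  have "(\<lambda>(n, j, k, s). xi n j k s) = sample" by (auto simp: sample_def fun_eq_iff split: prod.splits)
  then show ?thesis using xi_indep by (simp add: sample_index_def)
qed

lemma distr_sample: "i \<in> sample_index \<Longrightarrow> distr \<Omega> D (sample i) = D"
  using xi_distr by (auto simp: sample_index_def)

text \<open>The iterates are computed along one sample path \<open>y\<close>, recast as a sample family over the
  one-point space; evaluating them on paths spliced from two independent \<open>\<omega>\<close>'s is how
  conditioning on the past is expressed below.\<close>

definition as_sample_family :: "(kavg_index \<Rightarrow> 'x) \<Rightarrow> nat \<Rightarrow> nat \<Rightarrow> nat \<Rightarrow> nat \<Rightarrow> unit \<Rightarrow> 'x" where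
  "as_sample_family y n j k s u = y (n, j, k, s)"

definition local_iter :: "(kavg_index \<Rightarrow> 'x) \<Rightarrow> nat \<Rightarrow> nat \<Rightarrow> 'a \<Rightarrow> nat \<Rightarrow> 'a" where
  "local_iter y n j w k = kavg_local G (\<lambda>_. gbar) (\<lambda>_. Bbar) (as_sample_family y) n j w k ()"

definition round_map :: "(kavg_index \<Rightarrow> 'x) \<Rightarrow> nat \<Rightarrow> 'a \<Rightarrow> 'a" where
  "round_map y n w = (1 / real P) *\<^sub>R (\<Sum>j=1..P. local_iter y n j w K)"

definition avg_iter :: "(kavg_index \<Rightarrow> 'x) \<Rightarrow> 'a \<Rightarrow> nat \<Rightarrow> 'a" where
  "avg_iter y w1 m = kavg_aux G (\<lambda>_. gbar) (\<lambda>_. Bbar) (as_sample_family y) P K w1 m ()"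

lemma local_iter_0[simp]: "local_iter y n j w 0 = w"
  by (simp add: local_iter_def)

lemma local_iter_Suc: "local_iter y n j w (Suc k) =
   local_iter y n j w k - (gbar / real Bbar) *\<^sub>R (\<Sum>s=1..Bbar. G (local_iter y n j w k) (y (n, j, Suc k, s)))"
  by (simp add: local_iter_def as_sample_family_def Let_def)

lemma avg_iter_0[simp]: "avg_iter y w1 0 = w1"
  by (simp add: avg_iter_def)

lemma avg_iter_Suc: "avg_iter y w1 (Suc m) = round_map y (Suc m) (avg_iter y w1 m)"
  by (simp add: avg_iter_def round_map_def local_iter_def)

lemma kavg_local_eq: "kavg_local G (\<lambda>_. gbar) (\<lambda>_. Bbar) xi n j w k \<omega> = local_iter (sample_path \<omega>) n j w k"
  by (induction k) (simp_all add: local_iter_Suc sample_def Let_def)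

lemma kavg_aux_eq: "kavg_aux G (\<lambda>_. gbar) (\<lambda>_. Bbar) xi P K w1 m \<omega> = avg_iter (sample_path \<omega>) w1 m"
  by (induction m) (simp_all add: avg_iter_Suc round_map_def kavg_local_eq)

lemma local_iter_cong:
  assumes "\<And>k' s. k' \<in> {1..k} \<Longrightarrow> s \<in> {1..Bbar} \<Longrightarrow> y (n, j, k', s) = y' (n, j, k', s)"
  shows "local_iter y n j w k = local_iter y' n j w k"
  using assms
proof (induction k)
  case 0 then show ?case by simp
next
  case (Suc k)
  have IH: "local_iter y n j w k = local_iter y' n j w k" using Suc by auto
  show ?case unfolding local_iter_Suc IH
    using Suc.prems by (intro arg_cong2[where f="(-)"] refl arg_cong2[where f="(*\<^sub>R)"] sum.cong) auto
qed

lemma round_map_cong: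
  assumes "\<And>j k s. j \<in> {1..P} \<Longrightarrow> k \<in> {1..K} \<Longrightarrow> s \<in> {1..Bbar} \<Longrightarrow> y (n, j, k, s) = y' (n, j, k, s)"
  shows "round_map y n x = round_map y' n x"
  unfolding round_map_def using assms by (intro arg_cong2[where f="(*\<^sub>R)"] refl sum.cong local_iter_cong) auto

lemma avg_iter_cong:
  assumes "\<And>i. i \<in> sample_index \<Longrightarrow> fst i \<le> m \<Longrightarrow> y i = y' i"
  shows "avg_iter y w1 m = avg_iter y' w1 m"
  using assms
proof (induction m)
  case 0 then show ?case by simp
next
  case (Suc m)
  have IH: "avg_iter y w1 m = avg_iter y' w1 m" using Suc by auto
  show ?case unfolding avg_iter_Suc IH round_map_def
    using Suc.prems by (intro arg_cong2[where f="(*\<^sub>R)"] refl sum.cong local_iter_cong) (auto simp: sample_index_def)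
qed

lemma measurable_G_compose: "f \<in> borel_measurable N \<Longrightarrow> g \<in> measurable N D \<Longrightarrow> (\<lambda>z. G (f z) (g z)) \<in> borel_measurable N"
  using measurable_Pair_compose_split[OF G_meas] by blast

lemma measurable_local_iter:
  assumes "\<And>k' s. k' \<in> {1..k} \<Longrightarrow> s \<in> {1..Bbar} \<Longrightarrow> (\<lambda>z. Yf z (n, j, k', s)) \<in> measurable N D"
    and "W \<in> borel_measurable N"
  shows "(\<lambda>z. local_iter (Yf z) n j (W z) k) \<in> borel_measurable N"
  using assms(1)
proof (induction k)
  case 0 then show ?case using assms(2) by simp
next
  case (Suc k)
  have IH: "(\<lambda>z. local_iter (Yf z) n j (W z) k) \<in> borel_measurable N" using Suc by auto
  have "(\<lambda>z. G (local_iter (Yf z) n j (W z) k) (Yf z (n, j, Suc k, s))) \<in> borel_measurable N" if "s \<in> {1..Bbar}" for s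
    using measurable_G_compose[OF IH Suc.prems[of "Suc k" s]] that by auto
  then have "(\<lambda>z. \<Sum>s=1..Bbar. G (local_iter (Yf z) n j (W z) k) (Yf z (n, j, Suc k, s))) \<in> borel_measurable N"
    by (intro borel_measurable_sum) auto
  then show ?case unfolding local_iter_Suc using IH by measurable
qed

definition samples_measurable :: "'c measure \<Rightarrow> ('c \<Rightarrow> kavg_index \<Rightarrow> 'x) \<Rightarrow> nat \<Rightarrow> nat \<Rightarrow> bool" where
  "samples_measurable N Yf n t \<longleftrightarrow> (\<forall>j\<in>{1..P}. \<forall>k\<in>{1..t}. \<forall>s\<in>{1..Bbar}. (\<lambda>z. Yf z (n, j, k, s)) \<in> measurable N D)"

lemma samples_measurable_mono: "samples_measurable N Yf n t \<Longrightarrow> t' \<le> t \<Longrightarrow> samples_measurable N Yf n t'"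
  unfolding samples_measurable_def by (meson atLeastAtMost_iff order_trans)

lemma samples_measurable_sample:
  assumes "1 \<le> n" "t \<le> K"
  shows "samples_measurable \<Omega> (\<lambda>\<omega> i. sample i \<omega>) n t"
  unfolding samples_measurable_def using assms by (auto intro!: xi_meas)

lemma measurable_local_iter_samples: "samples_measurable N Yf n t \<Longrightarrow> j \<in> {1..P} \<Longrightarrow> (\<lambda>z. local_iter (Yf z) n j x t) \<in> borel_measurable N"
  unfolding samples_measurable_def by (intro measurable_local_iter) auto

lemma measurable_round_map:
  assumes "samples_measurable N Yf n K" and "W \<in> borel_measurable N"
  shows "(\<lambda>z. round_map (Yf z) n (W z)) \<in> borel_measurable N"
  unfolding round_map_def using assms
  by (intro borel_measurable_scaleR borel_measurable_const borel_measurable_sum measurable_local_iter)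
     (auto simp: samples_measurable_def)

lemma measurable_round_map_sample: "1 \<le> n \<Longrightarrow> (\<lambda>\<omega>. round_map (sample_path \<omega>) n x) \<in> borel_measurable \<Omega>"
  unfolding round_map_def
  by (intro borel_measurable_scaleR borel_measurable_const borel_measurable_sum measurable_local_iter_samples samples_measurable_sample) auto

lemma measurable_avg_iter:
  assumes "\<And>i. i \<in> sample_index \<Longrightarrow> fst i \<le> m \<Longrightarrow> (\<lambda>z. Yf z i) \<in> measurable N D"
  shows "(\<lambda>z. avg_iter (Yf z) w1 m) \<in> borel_measurable N"
  using assms
proof (induction m)
  case 0 then show ?case by simp
next
  case (Suc m)
  have IH: "(\<lambda>z. avg_iter (Yf z) w1 m) \<in> borel_measurable N" using Suc by auto
  have c: "samples_measurable N Yf (Suc m) K" unfolding samples_measurable_def using Suc.prems by (auto simp: sample_index_def)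
  show ?case unfolding avg_iter_Suc by (rule measurable_round_map[OF c IH])
qed

section \<open>Independent minibatch noise\<close>

lemma centered_sample_grad:
  fixes v :: 'a
  shows "integrable D (\<lambda>y. G v y - gradF v)"
    and "integrable D (\<lambda>y. (norm (G v y - gradF v))\<^sup>2)"
    and "(\<integral>y. G v y - gradF v \<partial>D) = 0"
    and "(\<integral>y. (norm (G v y - gradF v))\<^sup>2 \<partial>D) \<le> M"
proof -
  interpret D: prob_space D by (rule D_prob)
  have eq: "(norm (G v y - gradF v))\<^sup>2 = (norm (G v y))\<^sup>2 - 2 * (gradF v \<bullet> G v y) + (norm (gradF v))\<^sup>2" for y
    unfolding power2_norm_eq_inner by (simp add: inner_diff_left inner_diff_right inner_commute)
  have i1: "integrable D (\<lambda>y. (norm (G v y))\<^sup>2 - 2 * (gradF v \<bullet> G v y))"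
    by (intro Bochner_Integration.integrable_diff G_sq_int integrable_mult_right integrable_inner_right G_int)
  have i2: "integrable D (\<lambda>y. (norm (G v y))\<^sup>2 - 2 * (gradF v \<bullet> G v y) + (norm (gradF v))\<^sup>2)"
    by (intro Bochner_Integration.integrable_add i1 D.integrable_const)
  show "integrable D (\<lambda>y. G v y - gradF v)"
    by (intro Bochner_Integration.integrable_diff G_int D.integrable_const)
  show "integrable D (\<lambda>y. (norm (G v y - gradF v))\<^sup>2)"
    unfolding eq by (rule i2)
  show "(\<integral>y. G v y - gradF v \<partial>D) = 0"
    using G_int unbiased by (simp add: Bochner_Integration.integral_diff D.prob_space)
  have "(\<integral>y. (norm (G v y - gradF v))\<^sup>2 \<partial>D) = (\<integral>y. (norm (G v y))\<^sup>2 \<partial>D) - (norm (gradF v))\<^sup>2"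
  proof -
    have "(\<integral>y. (norm (G v y - gradF v))\<^sup>2 \<partial>D)
        = (\<integral>y. (norm (G v y))\<^sup>2 - 2 * (gradF v \<bullet> G v y) \<partial>D) + (norm (gradF v))\<^sup>2"
      unfolding eq using i1 by (simp add: Bochner_Integration.integral_add D.prob_space)
    also have "(\<integral>y. (norm (G v y))\<^sup>2 - 2 * (gradF v \<bullet> G v y) \<partial>D)
        = (\<integral>y. (norm (G v y))\<^sup>2 \<partial>D) - 2 * (gradF v \<bullet> gradF v)"
      using G_sq_int G_int unbiased
      by (subst Bochner_Integration.integral_diff) (auto intro!: integrable_mult_right)
    finally show ?thesis by (simp add: power2_norm_eq_inner)
  qed
  then show "(\<integral>y. (norm (G v y - gradF v))\<^sup>2 \<partial>D) \<le> M"
    using variance[of v] unbiased[of v] by simp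
qed

lemma nn_integral_norm_add_sample_le:
  fixes c :: "'x \<Rightarrow> 'a"
  assumes i: "i \<in> sample_index"
    and "integrable D c" "integrable D (\<lambda>y. (norm (c y))\<^sup>2)" "(\<integral>y. c y \<partial>D) = 0"
    and cV: "(\<integral>y. (norm (c y))\<^sup>2 \<partial>D) \<le> V"
  shows "(\<integral>\<^sup>+\<omega>. ennreal ((norm (b + \<alpha> *\<^sub>R c (sample i \<omega>)))\<^sup>2) \<partial>\<Omega>) \<le> ennreal ((norm b)\<^sup>2) + ennreal (\<alpha>\<^sup>2 * V)"
proof -
  have "0 \<le> (\<integral>y. (norm (c y))\<^sup>2 \<partial>D)" by (rule integral_nonneg_AE) auto
  with cV have V: "0 \<le> V" by linarith
  have "(\<integral>\<^sup>+\<omega>. ennreal ((norm (b + \<alpha> *\<^sub>R c (sample i \<omega>)))\<^sup>2) \<partial>\<Omega>)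
      = (\<integral>\<^sup>+y. ennreal ((norm (b + \<alpha> *\<^sub>R c y))\<^sup>2) \<partial>distr \<Omega> D (sample i))"
    using measurable_sample[OF i] borel_measurable_integrable[OF assms(2)] by (subst nn_integral_distr) auto
  also have "\<dots> = ennreal ((norm b)\<^sup>2 + \<alpha>\<^sup>2 * (\<integral>y. (norm (c y))\<^sup>2 \<partial>D))"
    unfolding distr_sample[OF i] by (rule nn_integral_norm_add_centered_power2[OF D_prob assms(2-4)])
  also have "\<dots> \<le> ennreal ((norm b)\<^sup>2 + \<alpha>\<^sup>2 * V)"
    using cV by (intro ennreal_leI add_left_mono mult_left_mono) auto
  also have "\<dots> = ennreal ((norm b)\<^sup>2) + ennreal (\<alpha>\<^sup>2 * V)"
    using V by (intro ennreal_plus) auto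
  finally show ?thesis .
qed

lemma nn_integral_norm_indep_sum_le:
  fixes c :: "'i \<Rightarrow> 'x \<Rightarrow> 'a"
  assumes T: "finite T"
    and inj: "inj_on \<iota> T" and sub: "\<iota> ` T \<subseteq> sample_index"
    and ci: "\<And>p. p \<in> T \<Longrightarrow> integrable D (c p)"
    and csq: "\<And>p. p \<in> T \<Longrightarrow> integrable D (\<lambda>y. (norm (c p y))\<^sup>2)"
    and c0: "\<And>p. p \<in> T \<Longrightarrow> (\<integral>y. c p y \<partial>D) = 0"
    and cV: "\<And>p. p \<in> T \<Longrightarrow> (\<integral>y. (norm (c p y))\<^sup>2 \<partial>D) \<le> V"
  shows "(\<integral>\<^sup>+\<omega>. ennreal ((norm (b + \<alpha> *\<^sub>R (\<Sum>p\<in>T. c p (sample (\<iota> p) \<omega>))))\<^sup>2) \<partial>\<Omega>)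
          \<le> ennreal ((norm b)\<^sup>2 + \<alpha>\<^sup>2 * (real (card T) * V))"
  using T inj sub ci csq c0 cV
proof (induction T rule: finite_induct)
  case empty
  then show ?case by (simp add: emeasure_space_Omega)
next
  case (insert p T)
  let ?X = "\<lambda>\<omega>. restrict (sample_path \<omega>) (\<iota> ` T)"
  let ?Y = "\<lambda>\<omega>. restrict (sample_path \<omega>) {\<iota> p}"
  let ?R = "PiM {\<iota> p} (\<lambda>_. D)"
  let ?S = "PiM (\<iota> ` T) (\<lambda>_. D)"
  have pI: "\<iota> p \<in> sample_index" using insert by auto
  have V0: "0 \<le> V"
  proof -
    have "0 \<le> (\<integral>y. (norm (c p y))\<^sup>2 \<partial>D)" by (rule integral_nonneg_AE) auto
    also have "\<dots> \<le> V" by (rule insert.prems(6)) simp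
    finally show ?thesis .
  qed
  have pT: "\<iota> p \<notin> \<iota> ` T" using insert by auto
  have ind: "prob_space.indep_var \<Omega> ?S ?X ?R ?Y"
    using prob_space.indep_var_restrict[OF prob indep_vars_sample, of "\<iota> ` T" "{\<iota> p}"] pT insert.prems by auto
  have cm: "\<And>q. q \<in> insert p T \<Longrightarrow> c q \<in> borel_measurable D"
    using insert.prems by (auto intro: borel_measurable_integrable)
  define f where "f z = ennreal ((norm (b + \<alpha> *\<^sub>R ((\<Sum>q\<in>T. c q (fst z (\<iota> q))) + c p (snd z (\<iota> p)))))\<^sup>2)" for z
  have fm: "f \<in> borel_measurable (?S \<Otimes>\<^sub>M ?R)"
  proof -
    have "(\<lambda>z. c q (fst z (\<iota> q))) \<in> borel_measurable (?S \<Otimes>\<^sub>M ?R)" if "q \<in> T" for q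
      using that cm by (intro measurable_compose[OF _ cm[of q]]) auto
    then have "(\<lambda>z. \<Sum>q\<in>T. c q (fst z (\<iota> q))) \<in> borel_measurable (?S \<Otimes>\<^sub>M ?R)"
      by (intro borel_measurable_sum) auto
    moreover have "(\<lambda>z. c p (snd z (\<iota> p))) \<in> borel_measurable (?S \<Otimes>\<^sub>M ?R)"
      by (intro measurable_compose[OF _ cm[of p]]) auto
    ultimately show ?thesis unfolding f_def by measurable
  qed
  have eqf: "ennreal ((norm (b + \<alpha> *\<^sub>R (\<Sum>q\<in>insert p T. c q (sample (\<iota> q) \<omega>))))\<^sup>2) = f (?X \<omega>, ?Y \<omega>)" for \<omega>
    unfolding f_def using insert.hyps by (simp add: add.commute)
  have "(\<integral>\<^sup>+\<omega>. ennreal ((norm (b + \<alpha> *\<^sub>R (\<Sum>q\<in>insert p T. c q (sample (\<iota> q) \<omega>))))\<^sup>2) \<partial>\<Omega>)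
      = (\<integral>\<^sup>+\<omega>. f (?X \<omega>, ?Y \<omega>) \<partial>\<Omega>)" by (simp add: eqf)
  also have "\<dots> = (\<integral>\<^sup>+\<omega>. (\<integral>\<^sup>+\<omega>'. f (?X \<omega>, ?Y \<omega>') \<partial>\<Omega>) \<partial>\<Omega>)"
    by (rule prob_space.nn_integral_indep_var[OF prob ind fm])
  also have "\<dots> \<le> (\<integral>\<^sup>+\<omega>. ennreal ((norm (b + \<alpha> *\<^sub>R (\<Sum>q\<in>T. c q (sample (\<iota> q) \<omega>))))\<^sup>2) + ennreal (\<alpha>\<^sup>2 * V) \<partial>\<Omega>)"
  proof (intro nn_integral_mono)
    fix \<omega> assume "\<omega> \<in> space \<Omega>"
    define b' where "b' = b + \<alpha> *\<^sub>R (\<Sum>q\<in>T. c q (sample (\<iota> q) \<omega>))"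
    have fe: "f (?X \<omega>, ?Y \<omega>') = ennreal ((norm (b' + \<alpha> *\<^sub>R c p (sample (\<iota> p) \<omega>')))\<^sup>2)" for \<omega>'
      unfolding f_def b'_def by (simp add: algebra_simps)
    have "(\<integral>\<^sup>+\<omega>'. f (?X \<omega>, ?Y \<omega>') \<partial>\<Omega>) = (\<integral>\<^sup>+\<omega>'. ennreal ((norm (b' + \<alpha> *\<^sub>R c p (sample (\<iota> p) \<omega>')))\<^sup>2) \<partial>\<Omega>)"
      by (simp add: fe)
    also have "\<dots> \<le> ennreal ((norm b')\<^sup>2) + ennreal (\<alpha>\<^sup>2 * V)"
      using insert.prems by (intro nn_integral_norm_add_sample_le pI) auto
    finally show "(\<integral>\<^sup>+\<omega>'. f (?X \<omega>, ?Y \<omega>') \<partial>\<Omega>) \<le> ennreal ((norm (b + \<alpha> *\<^sub>R (\<Sum>q\<in>T. c q (sample (\<iota> q) \<omega>))))\<^sup>2) + ennreal (\<alpha>\<^sup>2 * V)"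
      unfolding b'_def .
  qed
  also have "\<dots> = (\<integral>\<^sup>+\<omega>. ennreal ((norm (b + \<alpha> *\<^sub>R (\<Sum>q\<in>T. c q (sample (\<iota> q) \<omega>))))\<^sup>2) \<partial>\<Omega>) + ennreal (\<alpha>\<^sup>2 * V)"
  proof -
    have "(\<lambda>\<omega>. \<Sum>q\<in>T. c q (sample (\<iota> q) \<omega>)) \<in> borel_measurable \<Omega>"
      using insert.prems cm by (intro borel_measurable_sum measurable_compose[OF measurable_sample]) auto
    then show ?thesis
      by (subst nn_integral_add) (auto simp: emeasure_space_Omega)
  qed
  also have "\<dots> \<le> ennreal ((norm b)\<^sup>2 + \<alpha>\<^sup>2 * (real (card T) * V)) + ennreal (\<alpha>\<^sup>2 * V)"
    using insert by (intro add_right_mono insert.IH) auto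
  also have "\<dots> = ennreal ((norm b)\<^sup>2 + \<alpha>\<^sup>2 * (real (card (insert p T)) * V))"
    using V0 insert.hyps by (subst ennreal_plus[symmetric]) (auto simp: algebra_simps)
  finally show ?case .
qed

definition batch_noise :: "'a \<Rightarrow> nat \<Rightarrow> nat \<Rightarrow> nat \<Rightarrow> 'b \<Rightarrow> 'a" where
  "batch_noise v n j k \<omega> = (1 / real Bbar) *\<^sub>R (\<Sum>s=1..Bbar. G v (sample (n, j, k, s) \<omega>) - gradF v)"

lemma measurable_batch_noise:
  assumes "1 \<le> n" "j \<in> {1..P}" "k \<in> {1..K}"
  shows "batch_noise v n j k \<in> borel_measurable \<Omega>"
proof -
  have "(\<lambda>\<omega>. G v (sample (n, j, k, s) \<omega>)) \<in> borel_measurable \<Omega>" if "s \<in> {1..Bbar}" for s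
    using assms that by (intro measurable_G_compose measurable_sample) (auto simp: sample_index_def)
  then show ?thesis
    unfolding batch_noise_def[abs_def] by (intro borel_measurable_scaleR borel_measurable_sum) auto
qed

lemma expected_norm_add_batch_noise:
  assumes "1 \<le> n" "j \<in> {1..P}" "k \<in> {1..K}"
  shows "(\<integral>\<^sup>+\<omega>. ennreal ((norm (b + batch_noise v n j k \<omega>))\<^sup>2) \<partial>\<Omega>) \<le> ennreal ((norm b)\<^sup>2 + M / real Bbar)"
proof -
  have "(\<integral>\<^sup>+\<omega>. ennreal ((norm (b + batch_noise v n j k \<omega>))\<^sup>2) \<partial>\<Omega>)
      \<le> ennreal ((norm b)\<^sup>2 + (1 / real Bbar)\<^sup>2 * (real (card {1..Bbar}) * M))"
    unfolding batch_noise_def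
    by (rule nn_integral_norm_indep_sum_le[where \<iota>="\<lambda>s. (n, j, k, s)" and c="\<lambda>_ y. G v y - gradF v"])
       (use assms centered_sample_grad in \<open>auto simp: inj_on_def sample_index_def\<close>)
  also have "(1 / real Bbar)\<^sup>2 * (real (card {1..Bbar}) * M) = M / real Bbar"
    using Bbar_real by (simp add: power2_eq_square)
  finally show ?thesis .
qed

lemma mean_batch_noise_eq:
  "(1 / real P) *\<^sub>R (\<Sum>j=1..P. batch_noise (v j) n j k \<omega>)
    = (1 / (real P * real Bbar)) *\<^sub>R (\<Sum>p\<in>{1..P} \<times> {1..Bbar}. G (v (fst p)) (sample (n, fst p, k, snd p) \<omega>) - gradF (v (fst p)))"
  unfolding batch_noise_def by (simp add: scaleR_sum_right sum.cartesian_product split_def)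

lemma expected_norm_add_mean_batch_noise:
  assumes "1 \<le> n" "k \<in> {1..K}"
  shows "(\<integral>\<^sup>+\<omega>. ennreal ((norm (b + (1 / real P) *\<^sub>R (\<Sum>j=1..P. batch_noise (v j) n j k \<omega>)))\<^sup>2) \<partial>\<Omega>)
    \<le> ennreal ((norm b)\<^sup>2 + M / (real P * real Bbar))"
proof -
  have "(\<integral>\<^sup>+\<omega>. ennreal ((norm (b + (1 / real P) *\<^sub>R (\<Sum>j=1..P. batch_noise (v j) n j k \<omega>)))\<^sup>2) \<partial>\<Omega>)
      \<le> ennreal ((norm b)\<^sup>2 + (1 / (real P * real Bbar))\<^sup>2 * (real (card ({1..P} \<times> {1..Bbar})) * M))"
    unfolding mean_batch_noise_eq
    by (rule nn_integral_norm_indep_sum_le[where \<iota>="\<lambda>p. (n, fst p, k, snd p)"])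
       (use assms centered_sample_grad in \<open>auto simp: inj_on_def sample_index_def\<close>)
  also have "(1 / (real P * real Bbar))\<^sup>2 * (real (card ({1..P} \<times> {1..Bbar})) * M) = M / (real P * real Bbar)"
    using Bbar_real P_real by (simp add: power2_eq_square)
  finally show ?thesis .
qed

definition splice :: "'i set \<Rightarrow> ('i \<Rightarrow> 'y) \<Rightarrow> ('i \<Rightarrow> 'y) \<Rightarrow> 'i \<Rightarrow> 'y" where
  "splice A y1 y2 = (\<lambda>i. if i \<in> A then y1 i else y2 i)"

lemma nn_integral_splice:
  assumes AB: "A \<inter> B = {}" "A \<subseteq> sample_index" "B \<subseteq> sample_index"
    and meas: "(\<lambda>z. \<Phi> (splice A (fst z) (snd z))) \<in> borel_measurable (PiM A (\<lambda>_. D) \<Otimes>\<^sub>M PiM B (\<lambda>_. D))"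
    and local: "\<And>y y'. (\<And>i. i \<in> A \<union> B \<Longrightarrow> y i = y' i) \<Longrightarrow> \<Phi> y = \<Phi> y'"
  shows "(\<integral>\<^sup>+\<omega>. \<Phi> (sample_path \<omega>) \<partial>\<Omega>) = (\<integral>\<^sup>+\<omega>. (\<integral>\<^sup>+\<omega>'. \<Phi> (splice A (sample_path \<omega>) (sample_path \<omega>')) \<partial>\<Omega>) \<partial>\<Omega>)"
proof -
  define f where "f z = \<Phi> (splice A (fst z) (snd z))" for z
  have ind: "prob_space.indep_var \<Omega> (PiM A (\<lambda>_. D)) (\<lambda>\<omega>. restrict (sample_path \<omega>) A) (PiM B (\<lambda>_. D)) (\<lambda>\<omega>. restrict (sample_path \<omega>) B)"
    using prob_space.indep_var_restrict[OF prob indep_vars_sample AB] .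
  have e1: "f (restrict (sample_path \<omega>) A, restrict (sample_path \<omega>) B) = \<Phi> (sample_path \<omega>)" for \<omega>
    unfolding f_def by (rule local) (auto simp: splice_def)
  have e2: "f (restrict (sample_path \<omega>) A, restrict (sample_path \<omega>') B) = \<Phi> (splice A (sample_path \<omega>) (sample_path \<omega>'))" for \<omega> \<omega>'
    unfolding f_def by (rule local) (use AB(1) in \<open>auto simp: splice_def\<close>)
  show ?thesis
    using prob_space.nn_integral_indep_var[OF prob ind, of f] meas unfolding f_def[symmetric] e1 e2 by simp
qed

lemma AE_splice:
  assumes AB: "A \<inter> B = {}" "A \<subseteq> sample_index" "B \<subseteq> sample_index"
    and Gm: "{z \<in> space (PiM A (\<lambda>_. D) \<Otimes>\<^sub>M PiM B (\<lambda>_. D)). Gd (splice A (fst z) (snd z))}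
              \<in> sets (PiM A (\<lambda>_. D) \<Otimes>\<^sub>M PiM B (\<lambda>_. D))"
    and local: "\<And>y y'. (\<And>i. i \<in> A \<union> B \<Longrightarrow> y i = y' i) \<Longrightarrow> Gd y = Gd y'"
    and all: "\<And>\<omega>. \<omega> \<in> space \<Omega> \<Longrightarrow> Gd (sample_path \<omega>)"
  shows "AE \<omega> in \<Omega>. AE \<omega>' in \<Omega>. Gd (splice A (sample_path \<omega>) (sample_path \<omega>'))"
proof -
  define Q where "Q z = Gd (splice A (fst z) (snd z))" for z
  have ind: "prob_space.indep_var \<Omega> (PiM A (\<lambda>_. D)) (\<lambda>\<omega>. restrict (sample_path \<omega>) A) (PiM B (\<lambda>_. D)) (\<lambda>\<omega>. restrict (sample_path \<omega>) B)"
    using prob_space.indep_var_restrict[OF prob indep_vars_sample AB] .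
  have e1: "Q (restrict (sample_path \<omega>) A, restrict (sample_path \<omega>) B) = Gd (sample_path \<omega>)" for \<omega>
    unfolding Q_def by (rule local) (auto simp: splice_def)
  have e2: "Q (restrict (sample_path \<omega>) A, restrict (sample_path \<omega>') B) = Gd (splice A (sample_path \<omega>) (sample_path \<omega>'))" for \<omega> \<omega>'
    unfolding Q_def by (rule local) (use AB(1) in \<open>auto simp: splice_def\<close>)
  have "AE \<omega> in \<Omega>. AE \<omega>' in \<Omega>. Q (restrict (sample_path \<omega>) A, restrict (sample_path \<omega>') B)"
    by (rule prob_space.AE_indep_var[OF prob ind]) (use Gm all e1 in \<open>auto simp: Q_def\<close>)
  then show ?thesis unfolding e2 .
qed

lemma measurable_splice:
  assumes "i \<in> A \<union> B"
  shows "(\<lambda>z. splice A (fst z) (snd z) i) \<in> measurable (PiM A (\<lambda>_. D) \<Otimes>\<^sub>M PiM B (\<lambda>_. D)) D"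
proof (cases "i \<in> A")
  case True
  then show ?thesis unfolding splice_def
    by (simp add: measurable_compose[OF measurable_fst measurable_component_singleton])
next
  case False
  then show ?thesis using assms unfolding splice_def
    by (simp add: measurable_compose[OF measurable_snd measurable_component_singleton])
qed

lemma samples_measurable_splice:
  assumes "\<And>j k s. j \<in> {1..P} \<Longrightarrow> k \<in> {1..t} \<Longrightarrow> s \<in> {1..Bbar} \<Longrightarrow> (n, j, k, s) \<in> A \<union> B"
  shows "samples_measurable (PiM A (\<lambda>_. D) \<Otimes>\<^sub>M PiM B (\<lambda>_. D)) (\<lambda>z. splice A (fst z) (snd z)) n t"
  unfolding samples_measurable_def by (intro ballI measurable_splice assms) auto

section \<open>One round along a fixed sample path\<close>

definition batch_grad :: "(kavg_index \<Rightarrow> 'x) \<Rightarrow> nat \<Rightarrow> 'a \<Rightarrow> nat \<Rightarrow> nat \<Rightarrow> 'a" where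
  "batch_grad y n x j t = (1 / real Bbar) *\<^sub>R (\<Sum>s=1..Bbar. G (local_iter y n j x t) (y (n, j, Suc t, s)))"

definition mean_grad :: "(kavg_index \<Rightarrow> 'x) \<Rightarrow> nat \<Rightarrow> 'a \<Rightarrow> nat \<Rightarrow> 'a" where
  "mean_grad y n x t = (1 / real P) *\<^sub>R (\<Sum>j=1..P. batch_grad y n x j t)"

definition gap_term :: "(kavg_index \<Rightarrow> 'x) \<Rightarrow> nat \<Rightarrow> 'a \<Rightarrow> nat \<Rightarrow> real" where
  "gap_term y n x t = L * gbar\<^sup>2 * real K / 2 * (norm (mean_grad y n x t - (1 / (L * gbar * real K)) *\<^sub>R gradF x))\<^sup>2"

definition batch_grad_sq :: "(kavg_index \<Rightarrow> 'x) \<Rightarrow> nat \<Rightarrow> 'a \<Rightarrow> nat \<Rightarrow> nat \<Rightarrow> real" where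
  "batch_grad_sq y n x j t = (norm (batch_grad y n x j t))\<^sup>2"

definition path_energy :: "(kavg_index \<Rightarrow> 'x) \<Rightarrow> nat \<Rightarrow> 'a \<Rightarrow> nat \<Rightarrow> nat \<Rightarrow> real" where
  "path_energy y n x j t = (\<Sum>i<t. batch_grad_sq y n x j i)"

text \<open>\<open>drift_weight\<close> is chosen so that \<open>drift_weight t - drift_weight (t + 1) = \<gamma>(L\<gamma>)\<^sup>2 t / 2\<close>
  exactly pays for \<open>grad_drift_bound\<close>, and \<open>drift_weight K = 0\<close>.\<close>

definition drift_weight :: "nat \<Rightarrow> real" where
  "drift_weight t = gbar * (L * gbar)\<^sup>2 / 4 * (real K * (real K - 1) - real t * (real t - 1))"

definition lyapunov :: "(kavg_index \<Rightarrow> 'x) \<Rightarrow> nat \<Rightarrow> 'a \<Rightarrow> nat \<Rightarrow> real" where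
  "lyapunov y n x t = (\<Sum>i<t. gap_term y n x i) + (1 / real P) * (\<Sum>j=1..P. drift_weight t * path_energy y n x j t)"

lemma local_iter_Suc_batch_grad: "local_iter y n j x (Suc t) = local_iter y n j x t - gbar *\<^sub>R batch_grad y n x j t"
  unfolding local_iter_Suc batch_grad_def by simp

lemma local_iter_eq_sum: "local_iter y n j x t = x - gbar *\<^sub>R (\<Sum>i<t. batch_grad y n x j i)"
  by (induction t) (simp_all add: local_iter_Suc_batch_grad algebra_simps scaleR_add_right)

lemma round_map_eq: "round_map y n x = x - gbar *\<^sub>R (\<Sum>t<K. mean_grad y n x t)"
proof -
  have "round_map y n x = (1 / real P) *\<^sub>R (\<Sum>j=1..P. x - gbar *\<^sub>R (\<Sum>i<K. batch_grad y n x j i))"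
    unfolding round_map_def by (simp add: local_iter_eq_sum)
  also have "\<dots> = (1 / real P) *\<^sub>R (real P *\<^sub>R x - gbar *\<^sub>R (\<Sum>i<K. \<Sum>j=1..P. batch_grad y n x j i))"
    using sum.swap[of "\<lambda>j i. batch_grad y n x j i" "{..<K}" "{1..P}"]
    by (simp add: sum_subtractf scaleR_sum_right[symmetric] sum_constant_scaleR)
  also have "\<dots> = x - gbar *\<^sub>R (\<Sum>t<K. mean_grad y n x t)"
    using P_real by (simp add: mean_grad_def scaleR_sum_right algebra_simps)
  finally show ?thesis .
qed

lemma drift_weight_K: "drift_weight K = 0"
  by (simp add: drift_weight_def)

lemma drift_weight_nonneg: "t \<le> K \<Longrightarrow> drift_weight t \<ge> 0"
proof -
  assume tK: "t \<le> K"
  have "real t * (real t - 1) \<le> real K * (real K - 1)"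
  proof (cases "t = 0")
    case True then show ?thesis using K_real by simp
  next
    case False then show ?thesis using tK by (intro mult_mono) auto
  qed
  then show ?thesis using gbar_pos by (simp add: drift_weight_def)
qed

lemma drift_weight_Suc: "drift_weight t = drift_weight (Suc t) + gbar / 2 * (L * gbar)\<^sup>2 * real t"
proof -
  have "real K * (real K - 1) - real t * (real t - 1) = (real K * (real K - 1) - real (Suc t) * (real (Suc t) - 1)) + 2 * real t"
    by (simp add: algebra_simps)
  then have "drift_weight t = gbar * (L * gbar)\<^sup>2 / 4 * ((real K * (real K - 1) - real (Suc t) * (real (Suc t) - 1)) + 2 * real t)"
    unfolding drift_weight_def by simp
  also have "\<dots> = drift_weight (Suc t) + gbar / 2 * (L * gbar)\<^sup>2 * real t"
    unfolding drift_weight_def by (simp add: distrib_left)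
  finally show ?thesis .
qed

lemma gap_term_nonneg: "gap_term y n x t \<ge> 0"
  unfolding gap_term_def using L_pos gbar_pos by simp

lemma path_energy_nonneg: "path_energy y n x j t \<ge> 0"
  unfolding path_energy_def batch_grad_sq_def by (simp add: sum_nonneg)

lemma lyapunov_nonneg: "t \<le> K \<Longrightarrow> lyapunov y n x t \<ge> 0"
  unfolding lyapunov_def using P_real drift_weight_nonneg gap_term_nonneg path_energy_nonneg
  by (intro add_nonneg_nonneg sum_nonneg mult_nonneg_nonneg) auto

lemma lyapunov_0: "lyapunov y n x 0 = 0"
  unfolding lyapunov_def path_energy_def by simp

lemma lyapunov_Suc:
  "lyapunov y n x (Suc t) = (\<Sum>i<t. gap_term y n x i) + (1 / real P) * (\<Sum>j=1..P. drift_weight (Suc t) * path_energy y n x j t)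
     + gap_term y n x t + (1 / real P) * (\<Sum>j=1..P. drift_weight (Suc t) * batch_grad_sq y n x j t)"
  unfolding lyapunov_def path_energy_def by (simp add: sum.distrib distrib_left algebra_simps)

lemma lyapunov_K: "lyapunov y n x K = (\<Sum>t<K. gap_term y n x t)"
  unfolding lyapunov_def drift_weight_K by simp

lemma gap_square_expand:
  "L * gbar\<^sup>2 * real K / 2 * (norm (u - (1 / (L * gbar * real K)) *\<^sub>R g))\<^sup>2
    = L * gbar\<^sup>2 * real K / 2 * (norm u)\<^sup>2 - gbar * (g \<bullet> u) + (norm g)\<^sup>2 / (2 * L * real K)"
proof -
  have "(norm (u - (1 / (L * gbar * real K)) *\<^sub>R g))\<^sup>2
      = (norm u)\<^sup>2 - 2 * (1 / (L * gbar * real K)) * (g \<bullet> u) + (1 / (L * gbar * real K))\<^sup>2 * (norm g)\<^sup>2"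
    unfolding power2_norm_eq_inner by (simp add: inner_diff_left inner_diff_right inner_commute power2_eq_square algebra_simps)
  then show ?thesis using L_pos gbar_pos K_real by (simp add: field_simps power2_eq_square)
qed

lemma round_descent:
  "F (round_map y n x) + (norm (gradF x))\<^sup>2 / (2 * L) \<le> F x + (\<Sum>t<K. gap_term y n x t)"
proof -
  define g where "g = gradF x"
  define d where "d = - gbar *\<^sub>R (\<Sum>t<K. mean_grad y n x t)"
  have r: "round_map y n x = x + d" unfolding d_def round_map_eq by simp
  have "F (x + d) \<le> F x + g \<bullet> d + L / 2 * (norm d)\<^sup>2"
    unfolding g_def by (rule descent_lemma[OF deriv lipschitz])
  also have "(norm d)\<^sup>2 \<le> gbar\<^sup>2 * (real K * (\<Sum>t<K. (norm (mean_grad y n x t))\<^sup>2))"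
  proof -
    have "(norm d)\<^sup>2 = gbar\<^sup>2 * (norm (\<Sum>t<K. mean_grad y n x t))\<^sup>2"
      unfolding d_def using gbar_pos by (simp add: power_mult_distrib)
    also have "\<dots> \<le> gbar\<^sup>2 * (real (card {..<K}) * (\<Sum>t<K. (norm (mean_grad y n x t))\<^sup>2))"
      by (intro mult_left_mono norm_sum_power2_le) auto
    finally show ?thesis by simp
  qed
  then have "F x + g \<bullet> d + L / 2 * (norm d)\<^sup>2 \<le> F x + g \<bullet> d + L / 2 * (gbar\<^sup>2 * (real K * (\<Sum>t<K. (norm (mean_grad y n x t))\<^sup>2)))"
    using L_pos by simp
  also have "\<dots> = F x + (\<Sum>t<K. gap_term y n x t) - (norm g)\<^sup>2 / (2 * L)"
  proof -
    have q: "gap_term y n x t = L * gbar\<^sup>2 * real K / 2 * (norm (mean_grad y n x t))\<^sup>2 - gbar * (g \<bullet> mean_grad y n x t)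
               + (norm g)\<^sup>2 / (2 * L * real K)" for t
      unfolding gap_term_def g_def by (rule gap_square_expand)
    have gd: "g \<bullet> d = - gbar * (\<Sum>t<K. g \<bullet> mean_grad y n x t)"
      unfolding d_def by (simp add: inner_sum_right)
    have c: "(\<Sum>t<K. (norm g)\<^sup>2 / (2 * L * real K)) = (norm g)\<^sup>2 / (2 * L)"
    proof -
      have "K \<noteq> 0" using K_pos by linarith
      then show ?thesis using L_pos by simp
    qed
    have sQ: "(\<Sum>t<K. gap_term y n x t) = L * gbar\<^sup>2 * real K / 2 * (\<Sum>t<K. (norm (mean_grad y n x t))\<^sup>2)
         - gbar * (\<Sum>t<K. g \<bullet> mean_grad y n x t) + (norm g)\<^sup>2 / (2 * L)"
    proof -
      have "(\<Sum>t<K. gap_term y n x t) = (\<Sum>t<K. L * gbar\<^sup>2 * real K / 2 * (norm (mean_grad y n x t))\<^sup>2)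
         - (\<Sum>t<K. gbar * (g \<bullet> mean_grad y n x t)) + (\<Sum>t<K. (norm g)\<^sup>2 / (2 * L * real K))"
        by (simp only: q sum.distrib sum_subtractf)
      then show ?thesis unfolding c by (simp add: sum_distrib_left)
    qed
    show ?thesis unfolding gd sQ by (simp add: algebra_simps)
  qed
  finally show ?thesis unfolding r g_def by simp
qed

lemma grad_drift_bound:
  "(norm (gradF x - gradF (local_iter y n j x t)))\<^sup>2 \<le> L\<^sup>2 * gbar\<^sup>2 * real t * path_energy y n x j t"
proof -
  have "norm (gradF x - gradF (local_iter y n j x t)) \<le> L * norm (x - local_iter y n j x t)"
    by (rule lipschitz)
  also have "\<dots> = L * gbar * norm (\<Sum>i<t. batch_grad y n x j i)"
    using L_pos gbar_pos by (simp add: local_iter_eq_sum)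
  finally have "(norm (gradF x - gradF (local_iter y n j x t)))\<^sup>2 \<le> (L * gbar * norm (\<Sum>i<t. batch_grad y n x j i))\<^sup>2"
    by (intro power_mono) auto
  also have "\<dots> = L\<^sup>2 * gbar\<^sup>2 * (norm (\<Sum>i<t. batch_grad y n x j i))\<^sup>2"
    by (simp add: power_mult_distrib)
  also have "\<dots> \<le> L\<^sup>2 * gbar\<^sup>2 * (real (card {..<t}) * (\<Sum>i<t. (norm (batch_grad y n x j i))\<^sup>2))"
    by (intro mult_left_mono norm_sum_power2_le) auto
  finally show ?thesis by (simp add: path_energy_def batch_grad_sq_def)
qed

definition grad_slack :: "'a \<Rightarrow> nat \<Rightarrow> real" where
  "grad_slack x t = (1 - L * gbar * real K) / (2 * L * real K) * (norm (gradF x))\<^sup>2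
     + (if t = 0 then gbar * (L * gbar)\<^sup>2 / 2 * (norm (gradF x))\<^sup>2 else 0)"

lemma grad_slack_nonneg: "grad_slack x t \<ge> 0"
  unfolding grad_slack_def using L_gbar_K_le_1 L_pos K_real gbar_pos
  by (intro add_nonneg_nonneg mult_nonneg_nonneg divide_nonneg_pos) auto

lemma step_size_condition: "(L * gbar)\<^sup>2 * (real K * (real K - 1)) / 2 - (L * gbar)\<^sup>2 + L * gbar * real K \<le> 1"
proof -
  have "L\<^sup>2 * gbar\<^sup>2 * (real K + 1) * (real K - 2) / 2 = (L * gbar)\<^sup>2 * (real K * (real K - 1)) / 2 - (L * gbar)\<^sup>2"
    by (simp add: power_mult_distrib field_simps)
  then show ?thesis using cond1 by linarith
qed

lemma drift_weight_Suc_bound: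
  assumes "t < K"
  shows "L * gbar\<^sup>2 * real K / 2 - gbar / 2 + drift_weight (Suc t)
     \<le> (if t = 0 then gbar * (L * gbar)\<^sup>2 / 2 else 0)"
proof -
  define q where "q = L * gbar"
  have c1: "q\<^sup>2 * (real K * (real K - 1)) / 2 - q\<^sup>2 + q * real K \<le> 1"
    using step_size_condition unfolding q_def .
  have kap: "L * gbar\<^sup>2 * real K / 2 - gbar / 2 + drift_weight (Suc t)
      = gbar / 2 * (q * real K - 1 + q\<^sup>2 * (real K * (real K - 1)) / 2 - q\<^sup>2 * (real (Suc t) * real t) / 2)"
    unfolding drift_weight_def q_def by (simp add: field_simps power2_eq_square)
  show ?thesis
  proof (cases "t = 0")
    case True
    then have "L * gbar\<^sup>2 * real K / 2 - gbar / 2 + drift_weight (Suc t)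
      = gbar / 2 * (q * real K - 1 + q\<^sup>2 * (real K * (real K - 1)) / 2)" unfolding kap by simp
    also have "\<dots> \<le> gbar / 2 * q\<^sup>2"
      using c1 gbar_pos by (intro mult_left_mono) auto
    finally show ?thesis using True unfolding q_def by simp
  next
    case False
    then have "real (Suc t) * real t \<ge> 2"
    proof -
      have "Suc t * t \<ge> 2 * 1" using False by (intro mult_mono) auto
      then show ?thesis by (metis of_nat_mult of_nat_le_iff of_nat_numeral mult_1_right)
    qed
    then have "q\<^sup>2 * (real (Suc t) * real t) \<ge> q\<^sup>2 * 2" by (intro mult_left_mono) auto
    then have "q * real K - 1 + q\<^sup>2 * (real K * (real K - 1)) / 2 - q\<^sup>2 * (real (Suc t) * real t) / 2 \<le> 0"
      using c1 by linarith
    then have "gbar / 2 * (q * real K - 1 + q\<^sup>2 * (real K * (real K - 1)) / 2 - q\<^sup>2 * (real (Suc t) * real t) / 2) \<le> 0"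
      using gbar_pos by (simp add: mult_nonneg_nonpos)
    then show ?thesis using False unfolding kap by simp
  qed
qed

lemma lyapunov_step_processor:
  fixes x :: 'a and y :: "kavg_index \<Rightarrow> 'x" and n j t :: nat
  assumes tK: "t < K"
  defines "g \<equiv> gradF x" and "h \<equiv> gradF (local_iter y n j x t)"
  shows "L * gbar\<^sup>2 * real K / 2 * (norm h)\<^sup>2 - gbar * (g \<bullet> h) + drift_weight (Suc t) * (path_energy y n x j t + (norm h)\<^sup>2)
      \<le> drift_weight t * path_energy y n x j t - gbar / 2 * (norm g)\<^sup>2
        + (if t = 0 then gbar * (L * gbar)\<^sup>2 / 2 * (norm g)\<^sup>2 else 0)"
proof -
  define c1 where "c1 = L * gbar\<^sup>2 * real K / 2"
  define slack0 where "slack0 = (if t = 0 then gbar * (L * gbar)\<^sup>2 / 2 * (norm g)\<^sup>2 else 0)"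
  have polarization: "- gbar * (g \<bullet> h) = gbar / 2 * ((norm (g - h))\<^sup>2 - (norm g)\<^sup>2 - (norm h)\<^sup>2)"
    unfolding power2_norm_eq_inner by (simp add: inner_diff_left inner_diff_right inner_commute algebra_simps)
  have drift: "(norm (g - h))\<^sup>2 \<le> L\<^sup>2 * gbar\<^sup>2 * real t * path_energy y n x j t"
    unfolding g_def h_def by (rule grad_drift_bound)
  have coeff_h: "(c1 - gbar / 2 + drift_weight (Suc t)) * (norm h)\<^sup>2 \<le> slack0"
  proof (cases "t = 0")
    case True
    then have "h = g" unfolding h_def g_def by simp
    moreover have "c1 - gbar / 2 + drift_weight (Suc t) \<le> gbar * (L * gbar)\<^sup>2 / 2"
      using drift_weight_Suc_bound[OF tK] True unfolding c1_def by simp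
    then have "(c1 - gbar / 2 + drift_weight (Suc t)) * (norm g)\<^sup>2 \<le> gbar * (L * gbar)\<^sup>2 / 2 * (norm g)\<^sup>2"
      by (intro mult_right_mono) auto
    ultimately show ?thesis unfolding slack0_def using True by simp
  next
    case False
    then have "c1 - gbar / 2 + drift_weight (Suc t) \<le> 0"
      using drift_weight_Suc_bound[OF tK] unfolding c1_def by simp
    then show ?thesis unfolding slack0_def using False by (simp add: mult_nonpos_nonneg)
  qed
  have weight_step: "drift_weight t = drift_weight (Suc t) + gbar / 2 * L\<^sup>2 * gbar\<^sup>2 * real t"
    using drift_weight_Suc[of t] by (simp add: power_mult_distrib)
  have "c1 * (norm h)\<^sup>2 - gbar * (g \<bullet> h) + drift_weight (Suc t) * (path_energy y n x j t + (norm h)\<^sup>2)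
      = (c1 - gbar / 2 + drift_weight (Suc t)) * (norm h)\<^sup>2 + gbar / 2 * (norm (g - h))\<^sup>2
        + drift_weight (Suc t) * path_energy y n x j t - gbar / 2 * (norm g)\<^sup>2"
    using polarization by (simp add: algebra_simps)
  also have "\<dots> \<le> slack0 + gbar / 2 * (L\<^sup>2 * gbar\<^sup>2 * real t * path_energy y n x j t) + drift_weight (Suc t) * path_energy y n x j t - gbar / 2 * (norm g)\<^sup>2"
    using coeff_h drift gbar_pos by (intro add_mono diff_mono order_refl mult_left_mono) auto
  also have "\<dots> = drift_weight t * path_energy y n x j t - gbar / 2 * (norm g)\<^sup>2 + slack0"
    unfolding weight_step by (simp add: algebra_simps)
  finally show ?thesis unfolding c1_def slack0_def .
qed

lemma lyapunov_step_pathwise: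
  assumes tK: "t < K"
  shows "L * gbar\<^sup>2 * real K / 2 * (norm ((1 / real P) *\<^sub>R (\<Sum>j=1..P. gradF (local_iter y n j x t)) - (1 / (L * gbar * real K)) *\<^sub>R gradF x))\<^sup>2
     + (1 / real P) * (\<Sum>j=1..P. drift_weight (Suc t) * (path_energy y n x j t + (norm (gradF (local_iter y n j x t)))\<^sup>2))
     \<le> (1 / real P) * (\<Sum>j=1..P. drift_weight t * path_energy y n x j t) + grad_slack x t"
proof -
  define g where "g = gradF x"
  define h where "h j = gradF (local_iter y n j x t)" for j
  define c1 where "c1 = L * gbar\<^sup>2 * real K / 2"
  define hh where "hh = (1 / real P) *\<^sub>R (\<Sum>j=1..P. h j)"
  define slack0 where "slack0 = (if t = 0 then gbar * (L * gbar)\<^sup>2 / 2 * (norm g)\<^sup>2 else 0)"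
  have gap_expand: "c1 * (norm (hh - (1 / (L * gbar * real K)) *\<^sub>R g))\<^sup>2
      = c1 * (norm hh)\<^sup>2 - gbar * (g \<bullet> hh) + (norm g)\<^sup>2 / (2 * L * real K)"
    unfolding c1_def by (rule gap_square_expand)
  have mean_sq_le: "(norm hh)\<^sup>2 \<le> (1 / real P) * (\<Sum>j=1..P. (norm (h j))\<^sup>2)"
    unfolding hh_def using norm_average_power2_le[of "{1..P}" h] P_pos by simp
  have inner_mean: "g \<bullet> hh = (1 / real P) * (\<Sum>j=1..P. g \<bullet> h j)"
    unfolding hh_def by (simp add: inner_sum_right)
  have processor: "c1 * (norm (h j))\<^sup>2 - gbar * (g \<bullet> h j) + drift_weight (Suc t) * (path_energy y n x j t + (norm (h j))\<^sup>2)
      \<le> drift_weight t * path_energy y n x j t - gbar / 2 * (norm g)\<^sup>2 + slack0" for j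
    using lyapunov_step_processor[where x=x and y=y and n=n and j=j, OF tK] unfolding c1_def slack0_def g_def h_def .
  have "c1 * (norm (hh - (1 / (L * gbar * real K)) *\<^sub>R g))\<^sup>2 + (1 / real P) * (\<Sum>j=1..P. drift_weight (Suc t) * (path_energy y n x j t + (norm (h j))\<^sup>2))
     \<le> (1 / real P) * (\<Sum>j=1..P. c1 * (norm (h j))\<^sup>2 - gbar * (g \<bullet> h j) + drift_weight (Suc t) * (path_energy y n x j t + (norm (h j))\<^sup>2))
        + (norm g)\<^sup>2 / (2 * L * real K)"
  proof -
    have "c1 * (norm hh)\<^sup>2 \<le> c1 * ((1 / real P) * (\<Sum>j=1..P. (norm (h j))\<^sup>2))"
      using mean_sq_le L_pos gbar_pos K_real unfolding c1_def by (intro mult_left_mono) auto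
    then show ?thesis unfolding gap_expand inner_mean
      by (simp add: sum.distrib sum_subtractf sum_distrib_left algebra_simps)
  qed
  also have "\<dots> \<le> (1 / real P) * (\<Sum>j=1..P. drift_weight t * path_energy y n x j t - gbar / 2 * (norm g)\<^sup>2 + slack0) + (norm g)\<^sup>2 / (2 * L * real K)"
    using P_real by (intro add_right_mono mult_left_mono sum_mono processor) auto
  also have "\<dots> = (1 / real P) * (\<Sum>j=1..P. drift_weight t * path_energy y n x j t) + grad_slack x t"
  proof -
    have "(1 / real P) * (\<Sum>j=1..P. drift_weight t * path_energy y n x j t - gbar / 2 * (norm g)\<^sup>2 + slack0)
        = (1 / real P) * (\<Sum>j=1..P. drift_weight t * path_energy y n x j t) - gbar / 2 * (norm g)\<^sup>2 + slack0"
    proof -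
      have "(\<Sum>j=1..P. drift_weight t * path_energy y n x j t - gbar / 2 * (norm g)\<^sup>2 + slack0)
          = (\<Sum>j=1..P. drift_weight t * path_energy y n x j t) - real P * (gbar / 2 * (norm g)\<^sup>2) + real P * slack0"
        by (simp add: sum.distrib sum_subtractf)
      then show ?thesis using P_real by (simp add: field_simps)
    qed
    moreover have "grad_slack x t = (norm g)\<^sup>2 / (2 * L * real K) - gbar / 2 * (norm g)\<^sup>2 + slack0"
      unfolding grad_slack_def slack0_def g_def using L_pos K_real by (simp add: field_simps)
    ultimately show ?thesis by simp
  qed
  finally show ?thesis unfolding c1_def hh_def h_def g_def .
qed

section \<open>One round in expectation\<close>

definition agree_upto :: "(kavg_index \<Rightarrow> 'x) \<Rightarrow> (kavg_index \<Rightarrow> 'x) \<Rightarrow> nat \<Rightarrow> nat \<Rightarrow> bool" where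
  "agree_upto y y' n t \<longleftrightarrow> (\<forall>j\<in>{1..P}. \<forall>k\<in>{1..t}. \<forall>s\<in>{1..Bbar}. y (n, j, k, s) = y' (n, j, k, s))"

lemma agree_upto_mono: "agree_upto y y' n t \<Longrightarrow> t' \<le> t \<Longrightarrow> agree_upto y y' n t'"
  unfolding agree_upto_def by (meson atLeastAtMost_iff order_trans)

lemma local_iter_agree: "agree_upto y y' n t \<Longrightarrow> j \<in> {1..P} \<Longrightarrow> local_iter y n j x t = local_iter y' n j x t"
  unfolding agree_upto_def by (intro local_iter_cong) auto

lemma batch_grad_agree: "agree_upto y y' n (Suc t) \<Longrightarrow> j \<in> {1..P} \<Longrightarrow> batch_grad y n x j t = batch_grad y' n x j t"
  unfolding batch_grad_def using local_iter_agree[OF agree_upto_mono[of y y' n "Suc t" t]]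
  by (intro arg_cong2[where f="(*\<^sub>R)"] refl sum.cong) (auto simp: agree_upto_def)

lemma mean_grad_agree: "agree_upto y y' n (Suc t) \<Longrightarrow> mean_grad y n x t = mean_grad y' n x t"
  unfolding mean_grad_def by (intro arg_cong2[where f="(*\<^sub>R)"] refl sum.cong batch_grad_agree) auto

lemma gap_term_agree: "agree_upto y y' n (Suc t) \<Longrightarrow> gap_term y n x t = gap_term y' n x t"
  unfolding gap_term_def using mean_grad_agree by simp

lemma batch_grad_sq_agree: "agree_upto y y' n (Suc t) \<Longrightarrow> j \<in> {1..P} \<Longrightarrow> batch_grad_sq y n x j t = batch_grad_sq y' n x j t"
  unfolding batch_grad_sq_def using batch_grad_agree by simp

lemma path_energy_agree: "agree_upto y y' n t \<Longrightarrow> j \<in> {1..P} \<Longrightarrow> path_energy y n x j t = path_energy y' n x j t"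
proof -
  assume a: "agree_upto y y' n t" and j: "j \<in> {1..P}"
  have "batch_grad_sq y n x j i = batch_grad_sq y' n x j i" if "i \<in> {..<t}" for i
    using agree_upto_mono[OF a, of "Suc i"] that j by (intro batch_grad_sq_agree) auto
  then show ?thesis unfolding path_energy_def by (rule sum.cong[OF refl])
qed

lemma batch_grad_eq_noise:
  assumes "agree_upto y y0 n t" "j \<in> {1..P}"
    and "\<And>s. s \<in> {1..Bbar} \<Longrightarrow> y (n, j, Suc t, s) = sample (n, j, Suc t, s) \<omega>"
  shows "batch_grad y n x j t = gradF (local_iter y0 n j x t) + batch_noise (local_iter y0 n j x t) n j (Suc t) \<omega>"
proof -
  have "batch_grad y n x j t = (1 / real Bbar) *\<^sub>R (\<Sum>s=1..Bbar. G (local_iter y0 n j x t) (sample (n, j, Suc t, s) \<omega>))"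
    unfolding batch_grad_def local_iter_agree[OF assms(1,2)] using assms(3) by simp
  also have "\<dots> = gradF (local_iter y0 n j x t) + batch_noise (local_iter y0 n j x t) n j (Suc t) \<omega>"
    unfolding batch_noise_def using Bbar_real by (simp add: sum_subtractf sum_constant_scaleR scaleR_diff_right)
  finally show ?thesis .
qed

lemma lyapunov_agree: "agree_upto y y' n t \<Longrightarrow> lyapunov y n x t = lyapunov y' n x t"
proof -
  assume a: "agree_upto y y' n t"
  have "gap_term y n x i = gap_term y' n x i" if "i \<in> {..<t}" for i
    using agree_upto_mono[OF a, of "Suc i"] that by (intro gap_term_agree) auto
  moreover have "path_energy y n x j t = path_energy y' n x j t" if "j \<in> {1..P}" for j
    using a that by (rule path_energy_agree)
  ultimately show ?thesis unfolding lyapunov_def by simp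
qed

lemma measurable_batch_grad: "samples_measurable N Yf n (Suc t) \<Longrightarrow> j \<in> {1..P} \<Longrightarrow> (\<lambda>z. batch_grad (Yf z) n x j t) \<in> borel_measurable N"
proof -
  assume c: "samples_measurable N Yf n (Suc t)" and j: "j \<in> {1..P}"
  have l: "(\<lambda>z. local_iter (Yf z) n j x t) \<in> borel_measurable N"
    using measurable_local_iter_samples[OF samples_measurable_mono[OF c] j] by auto
  have "(\<lambda>z. G (local_iter (Yf z) n j x t) (Yf z (n, j, Suc t, s))) \<in> borel_measurable N" if "s \<in> {1..Bbar}" for s
    using c j that by (intro measurable_G_compose l) (auto simp: samples_measurable_def)
  then show ?thesis unfolding batch_grad_def by (intro borel_measurable_scaleR borel_measurable_sum) auto
qed

lemma measurable_mean_grad: "samples_measurable N Yf n (Suc t) \<Longrightarrow> (\<lambda>z. mean_grad (Yf z) n x t) \<in> borel_measurable N"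
  unfolding mean_grad_def by (intro borel_measurable_scaleR borel_measurable_sum measurable_batch_grad) auto

lemma measurable_gap_term: "samples_measurable N Yf n (Suc t) \<Longrightarrow> (\<lambda>z. gap_term (Yf z) n x t) \<in> borel_measurable N"
proof -
  assume c: "samples_measurable N Yf n (Suc t)"
  have m[measurable]: "(\<lambda>z. mean_grad (Yf z) n x t) \<in> borel_measurable N" by (rule measurable_mean_grad[OF c])
  show ?thesis unfolding gap_term_def by measurable
qed

lemma measurable_batch_grad_sq: "samples_measurable N Yf n (Suc t) \<Longrightarrow> j \<in> {1..P} \<Longrightarrow> (\<lambda>z. batch_grad_sq (Yf z) n x j t) \<in> borel_measurable N"
proof -
  assume c: "samples_measurable N Yf n (Suc t)" and j: "j \<in> {1..P}"
  have m[measurable]: "(\<lambda>z. batch_grad (Yf z) n x j t) \<in> borel_measurable N" by (rule measurable_batch_grad[OF c j])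
  show ?thesis unfolding batch_grad_sq_def by measurable
qed

lemma measurable_path_energy: "samples_measurable N Yf n t \<Longrightarrow> j \<in> {1..P} \<Longrightarrow> (\<lambda>z. path_energy (Yf z) n x j t) \<in> borel_measurable N"
proof -
  assume a: "samples_measurable N Yf n t" and j: "j \<in> {1..P}"
  have "(\<lambda>z. batch_grad_sq (Yf z) n x j i) \<in> borel_measurable N" if "i \<in> {..<t}" for i
    using samples_measurable_mono[OF a, of "Suc i"] that j by (intro measurable_batch_grad_sq) auto
  then show ?thesis unfolding path_energy_def by (rule borel_measurable_sum)
qed

lemma measurable_lyapunov: "samples_measurable N Yf n t \<Longrightarrow> (\<lambda>z. lyapunov (Yf z) n x t) \<in> borel_measurable N"
proof -
  assume a: "samples_measurable N Yf n t"
  have "(\<lambda>z. gap_term (Yf z) n x i) \<in> borel_measurable N" if "i \<in> {..<t}" for i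
    using samples_measurable_mono[OF a, of "Suc i"] that by (intro measurable_gap_term) auto
  then have m1[measurable]: "(\<lambda>z. \<Sum>i<t. gap_term (Yf z) n x i) \<in> borel_measurable N"
    by (rule borel_measurable_sum)
  have "(\<lambda>z. drift_weight t * path_energy (Yf z) n x j t) \<in> borel_measurable N" if "j \<in> {1..P}" for j
    using measurable_path_energy[OF a that] by measurable
  then have m2[measurable]: "(\<lambda>z. \<Sum>j=1..P. drift_weight t * path_energy (Yf z) n x j t) \<in> borel_measurable N"
    by (rule borel_measurable_sum)
  show ?thesis unfolding lyapunov_def by measurable
qed

definition layer_cost :: "'a \<Rightarrow> nat \<Rightarrow> real" where
  "layer_cost x t = L * gbar\<^sup>2 * real K / 2 * (M / (real P * real Bbar)) + drift_weight (Suc t) * (M / real Bbar) + grad_slack x t"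

lemma layer_cost_nonneg: "t < K \<Longrightarrow> layer_cost x t \<ge> 0"
  unfolding layer_cost_def using grad_slack_nonneg[of x t] drift_weight_nonneg[of "Suc t"] L_pos gbar_pos K_real M_nonneg P_real Bbar_real
  by (intro add_nonneg_nonneg mult_nonneg_nonneg divide_nonneg_pos) auto

lemma lyapunov_Suc_eq_noise:
  assumes past: "agree_upto y y0 n t"
    and present: "\<And>j s. j \<in> {1..P} \<Longrightarrow> s \<in> {1..Bbar} \<Longrightarrow> y (n, j, Suc t, s) = sample (n, j, Suc t, s) \<omega>"
  shows "lyapunov y n x (Suc t)
    = (\<Sum>i<t. gap_term y0 n x i) + (1 / real P) * (\<Sum>j=1..P. drift_weight (Suc t) * path_energy y0 n x j t)
      + L * gbar\<^sup>2 * real K / 2 * (norm ((1 / real P) *\<^sub>R (\<Sum>j=1..P. gradF (local_iter y0 n j x t))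
          - (1 / (L * gbar * real K)) *\<^sub>R gradF x
          + (1 / real P) *\<^sub>R (\<Sum>j=1..P. batch_noise (local_iter y0 n j x t) n j (Suc t) \<omega>)))\<^sup>2
      + (\<Sum>j\<in>{1..P}. drift_weight (Suc t) / real P
          * (norm (gradF (local_iter y0 n j x t) + batch_noise (local_iter y0 n j x t) n j (Suc t) \<omega>))\<^sup>2)"
proof -
  define h where "h j = gradF (local_iter y0 n j x t)" for j
  define noise where "noise j = batch_noise (local_iter y0 n j x t) n j (Suc t) \<omega>" for j
  have batch: "batch_grad y n x j t = h j + noise j" if "j \<in> {1..P}" for j
    unfolding h_def noise_def using past that present by (intro batch_grad_eq_noise) auto
  have gap: "gap_term y n x t = L * gbar\<^sup>2 * real K / 2 * (norm ((1 / real P) *\<^sub>R (\<Sum>j=1..P. h j)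
      - (1 / (L * gbar * real K)) *\<^sub>R gradF x + (1 / real P) *\<^sub>R (\<Sum>j=1..P. noise j)))\<^sup>2"
  proof -
    have "mean_grad y n x t = (1 / real P) *\<^sub>R (\<Sum>j=1..P. h j) + (1 / real P) *\<^sub>R (\<Sum>j=1..P. noise j)"
      unfolding mean_grad_def by (simp add: batch sum.distrib scaleR_add_right)
    then show ?thesis unfolding gap_term_def by (simp add: algebra_simps)
  qed
  have "gap_term y n x i = gap_term y0 n x i" if "i < t" for i
    using agree_upto_mono[OF past, of "Suc i"] that by (intro gap_term_agree) auto
  moreover have "path_energy y n x j t = path_energy y0 n x j t" if "j \<in> {1..P}" for j
    using past that by (rule path_energy_agree)
  moreover have "(1 / real P) * (\<Sum>j=1..P. drift_weight (Suc t) * batch_grad_sq y n x j t)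
      = (\<Sum>j\<in>{1..P}. drift_weight (Suc t) / real P * (norm (h j + noise j))\<^sup>2)"
    unfolding batch_grad_sq_def sum_distrib_left by (intro sum.cong) (simp_all add: batch)
  ultimately show ?thesis unfolding lyapunov_Suc gap h_def noise_def by simp
qed

lemma lyapunov_step_expectation:
  assumes n: "1 \<le> n" and t: "t < K"
    and past: "\<And>\<omega>'. agree_upto (Yw \<omega>') y0 n t"
    and present: "\<And>\<omega>' j s. j \<in> {1..P} \<Longrightarrow> s \<in> {1..Bbar} \<Longrightarrow> Yw \<omega>' (n, j, Suc t, s) = sample (n, j, Suc t, s) \<omega>'"
  shows "(\<integral>\<^sup>+\<omega>'. ennreal (lyapunov (Yw \<omega>') n x (Suc t)) \<partial>\<Omega>) \<le> ennreal (lyapunov y0 n x t + layer_cost x t)"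
proof -
  define h where "h j = gradF (local_iter y0 n j x t)" for j
  define noise where "noise j \<omega>' = batch_noise (local_iter y0 n j x t) n j (Suc t) \<omega>'" for j \<omega>'
  define mnoise where "mnoise \<omega>' = (1 / real P) *\<^sub>R (\<Sum>j=1..P. noise j \<omega>')" for \<omega>'
  define a where "a = (1 / real P) *\<^sub>R (\<Sum>j=1..P. h j) - (1 / (L * gbar * real K)) *\<^sub>R gradF x"
  define c0 where "c0 = (\<Sum>i<t. gap_term y0 n x i) + (1 / real P) * (\<Sum>j=1..P. drift_weight (Suc t) * path_energy y0 n x j t)"
  define c1 where "c1 = L * gbar\<^sup>2 * real K / 2"
  define w where "w = drift_weight (Suc t) / real P"
  have c0_nonneg: "0 \<le> c0" unfolding c0_def
    using P_real drift_weight_nonneg[of "Suc t"] t gap_term_nonneg path_energy_nonneg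
    by (intro add_nonneg_nonneg sum_nonneg mult_nonneg_nonneg) auto
  have c1_nonneg: "0 \<le> c1" unfolding c1_def using L_pos by simp
  have w_nonneg: "0 \<le> w" unfolding w_def using drift_weight_nonneg[of "Suc t"] t P_real by simp
  have lyap: "lyapunov (Yw \<omega>') n x (Suc t) = c0 + c1 * (norm (a + mnoise \<omega>'))\<^sup>2 + (\<Sum>j\<in>{1..P}. w * (norm (h j + noise j \<omega>'))\<^sup>2)" for \<omega>'
    unfolding c0_def c1_def a_def mnoise_def noise_def h_def w_def
    using past present by (rule lyapunov_Suc_eq_noise)
  have noise_meas: "noise j \<in> borel_measurable \<Omega>" if "j \<in> {1..P}" for j
    unfolding noise_def[abs_def] using n t that by (intro measurable_batch_noise) auto
  then have [measurable]: "mnoise \<in> borel_measurable \<Omega>"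
    unfolding mnoise_def[abs_def] by (intro borel_measurable_scaleR borel_measurable_sum) auto
  have "(\<integral>\<^sup>+\<omega>'. ennreal (lyapunov (Yw \<omega>') n x (Suc t)) \<partial>\<Omega>)
      \<le> ennreal (c0 + c1 * ((norm a)\<^sup>2 + M / (real P * real Bbar))
          + (\<Sum>j\<in>{1..P}. w * ((norm (h j))\<^sup>2 + M / real Bbar)))"
    unfolding lyap
  proof (rule nn_integral_affine_le[OF _ c0_nonneg c1_nonneg])
    show "(\<integral>\<^sup>+\<omega>'. ennreal ((norm (a + mnoise \<omega>'))\<^sup>2) \<partial>\<Omega>) \<le> ennreal ((norm a)\<^sup>2 + M / (real P * real Bbar))"
      unfolding mnoise_def noise_def using n t by (intro expected_norm_add_mean_batch_noise) auto
    show "(\<integral>\<^sup>+\<omega>'. ennreal ((norm (h j + noise j \<omega>'))\<^sup>2) \<partial>\<Omega>) \<le> ennreal ((norm (h j))\<^sup>2 + M / real Bbar)"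
      if "j \<in> {1..P}" for j
      unfolding noise_def using n t that by (intro expected_norm_add_batch_noise) auto
    show "(\<lambda>\<omega>'. (norm (h j + noise j \<omega>'))\<^sup>2) \<in> borel_measurable \<Omega>" if "j \<in> {1..P}" for j
      using noise_meas[OF that] by measurable
  qed (use w_nonneg M_nonneg P_real Bbar_real in auto)
  also have "\<dots> \<le> ennreal (lyapunov y0 n x t + layer_cost x t)"
  proof (rule ennreal_leI)
    have pathwise: "c1 * (norm a)\<^sup>2 + (1 / real P) * (\<Sum>j=1..P. drift_weight (Suc t) * (path_energy y0 n x j t + (norm (h j))\<^sup>2))
        \<le> (1 / real P) * (\<Sum>j=1..P. drift_weight t * path_energy y0 n x j t) + grad_slack x t"
      using lyapunov_step_pathwise[OF t, of y0 n x] unfolding c1_def a_def h_def .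
    have "(\<Sum>j\<in>{1..P}. w * ((norm (h j))\<^sup>2 + M / real Bbar))
        = (\<Sum>j=1..P. w * (norm (h j))\<^sup>2) + real P * (w * (M / real Bbar))"
      by (simp add: distrib_left sum.distrib)
    also have "\<dots> = (1 / real P) * (\<Sum>j=1..P. drift_weight (Suc t) * (norm (h j))\<^sup>2) + drift_weight (Suc t) * (M / real Bbar)"
      unfolding w_def sum_distrib_left using P_real by simp
    moreover have "c0 + (1 / real P) * (\<Sum>j=1..P. drift_weight (Suc t) * (norm (h j))\<^sup>2)
        = (\<Sum>i<t. gap_term y0 n x i) + (1 / real P) * (\<Sum>j=1..P. drift_weight (Suc t) * (path_energy y0 n x j t + (norm (h j))\<^sup>2))"
      unfolding c0_def by (simp add: sum.distrib distrib_left algebra_simps)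
    moreover have "c1 * ((norm a)\<^sup>2 + M / (real P * real Bbar))
        = c1 * (norm a)\<^sup>2 + L * gbar\<^sup>2 * real K / 2 * (M / (real P * real Bbar))"
      unfolding c1_def by (simp add: algebra_simps)
    ultimately show "c0 + c1 * ((norm a)\<^sup>2 + M / (real P * real Bbar)) + (\<Sum>j\<in>{1..P}. w * ((norm (h j))\<^sup>2 + M / real Bbar))
        \<le> lyapunov y0 n x t + layer_cost x t"
      using pathwise unfolding lyapunov_def layer_cost_def by linarith
  qed
  finally show ?thesis .
qed

lemma lyapunov_expectation:
  assumes n1: "1 \<le> n"
  shows "t \<le> K \<Longrightarrow> (\<integral>\<^sup>+\<omega>. ennreal (lyapunov (sample_path \<omega>) n x t) \<partial>\<Omega>) \<le> ennreal (\<Sum>i<t. layer_cost x i)"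
proof (induction t)
  case 0
  then show ?case by (simp add: lyapunov_0)
next
  case (Suc t)
  then have tK: "t < K" by simp
  define A where "A = {i \<in> sample_index. fst i = n \<and> fst (snd (snd i)) \<le> t}"
  define B where "B = {i \<in> sample_index. fst i = n \<and> fst (snd (snd i)) = Suc t}"
  have AB: "A \<inter> B = {}" "A \<subseteq> sample_index" "B \<subseteq> sample_index" unfolding A_def B_def by auto
  have inAB: "(n, j, k, s) \<in> A \<union> B" if "j \<in> {1..P}" "k \<in> {1..Suc t}" "s \<in> {1..Bbar}" for j k s
    using that n1 tK unfolding A_def B_def sample_index_def by auto
  have "(\<integral>\<^sup>+\<omega>. ennreal (lyapunov (sample_path \<omega>) n x (Suc t)) \<partial>\<Omega>)
      = (\<integral>\<^sup>+\<omega>. (\<integral>\<^sup>+\<omega>'. ennreal (lyapunov (splice A (sample_path \<omega>) (sample_path \<omega>')) n x (Suc t)) \<partial>\<Omega>) \<partial>\<Omega>)"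
  proof (rule nn_integral_splice[OF AB, where \<Phi>="\<lambda>y. ennreal (lyapunov y n x (Suc t))"])
    show "(\<lambda>z. ennreal (lyapunov (splice A (fst z) (snd z)) n x (Suc t))) \<in> borel_measurable (PiM A (\<lambda>_. D) \<Otimes>\<^sub>M PiM B (\<lambda>_. D))"
      using measurable_lyapunov[OF samples_measurable_splice[OF inAB]] by measurable
    fix y y' :: "kavg_index \<Rightarrow> 'x"
    assume "\<And>i. i \<in> A \<union> B \<Longrightarrow> y i = y' i"
    then have "agree_upto y y' n (Suc t)" unfolding agree_upto_def using inAB by blast
    then show "ennreal (lyapunov y n x (Suc t)) = ennreal (lyapunov y' n x (Suc t))" by (simp add: lyapunov_agree)
  qed
  also have "\<dots> \<le> (\<integral>\<^sup>+\<omega>. ennreal (lyapunov (sample_path \<omega>) n x t + layer_cost x t) \<partial>\<Omega>)"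
  proof (intro nn_integral_mono lyapunov_step_expectation[OF n1 tK])
    fix \<omega> \<omega>'
    show "agree_upto (splice A (sample_path \<omega>) (sample_path \<omega>')) (sample_path \<omega>) n t"
      unfolding agree_upto_def splice_def using n1 tK by (auto simp: A_def sample_index_def)
    fix j s assume "j \<in> {1..P}" "s \<in> {1..Bbar}"
    then show "splice A (sample_path \<omega>) (sample_path \<omega>') (n, j, Suc t, s) = sample (n, j, Suc t, s) \<omega>'"
      unfolding splice_def by (auto simp: A_def)
  qed
  also have "\<dots> = (\<integral>\<^sup>+\<omega>. ennreal (lyapunov (sample_path \<omega>) n x t) \<partial>\<Omega>) + ennreal (layer_cost x t)"
  proof -
    have "(\<lambda>\<omega>. lyapunov (sample_path \<omega>) n x t) \<in> borel_measurable \<Omega>"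
      using measurable_lyapunov[OF samples_measurable_sample[OF n1]] tK by simp
    then show ?thesis
      using lyapunov_nonneg tK layer_cost_nonneg[OF tK]
      by (simp add: ennreal_plus nn_integral_add emeasure_space_Omega)
  qed
  also have "\<dots> \<le> ennreal (\<Sum>i<t. layer_cost x i) + ennreal (layer_cost x t)"
    using Suc by (intro add_right_mono) auto
  also have "\<dots> = ennreal (\<Sum>i<Suc t. layer_cost x i)"
  proof -
    have "0 \<le> (\<Sum>i<t. layer_cost x i)" using layer_cost_nonneg tK by (intro sum_nonneg) auto
    then show ?thesis using layer_cost_nonneg[OF tK] by (simp add: ennreal_plus[symmetric] del: ennreal_plus)
  qed
  finally show ?case .
qed

definition noise_cost :: real where
  "noise_cost = L * real K * gbar\<^sup>2 * M / (2 * real Bbar) * (real K / real P + L * (2 * real K - 1) * (real K - 1) * gbar / 6)"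

lemma noise_cost_nonneg: "noise_cost \<ge> 0"
  unfolding noise_cost_def using L_pos gbar_pos M_nonneg K_real P_real Bbar_real
  by (intro mult_nonneg_nonneg add_nonneg_nonneg divide_nonneg_pos) auto

lemma sum_grad_slack:
  "(\<Sum>t<K. grad_slack x t) = ((1 - L * gbar * real K) / (2 * L) + gbar * (L * gbar)\<^sup>2 / 2) * (norm (gradF x))\<^sup>2"
proof -
  have "0 \<in> {..<K}" using K_pos by auto
  then have "(\<Sum>t<K. grad_slack x t)
      = real K * ((1 - L * gbar * real K) / (2 * L * real K) * (norm (gradF x))\<^sup>2) + gbar * (L * gbar)\<^sup>2 / 2 * (norm (gradF x))\<^sup>2"
    unfolding grad_slack_def by (simp add: sum.distrib sum.delta)
  moreover have "real K * ((1 - L * gbar * real K) / (2 * L * real K) * (norm (gradF x))\<^sup>2)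
      = (1 - L * gbar * real K) / (2 * L) * (norm (gradF x))\<^sup>2"
    using K_pos by simp
  ultimately show ?thesis by (simp add: algebra_simps)
qed

lemma sum_layer_cost: "(\<Sum>t<K. layer_cost x t) = noise_cost + (\<Sum>t<K. grad_slack x t)"
proof -
  have "(\<Sum>t<K. drift_weight (Suc t))
      = gbar * (L * gbar)\<^sup>2 / 4 * (\<Sum>t<K. real K * (real K - 1) - real (Suc t) * (real (Suc t) - 1))"
    unfolding drift_weight_def by (simp add: sum_distrib_left)
  also have "\<dots> = gbar * (L * gbar)\<^sup>2 / 4 * (real K * (real K * (real K - 1)) - real (K + 1) * real K * (real K - 1) / 3)"
    unfolding sum_subtractf sum_Suc_times_self by simp
  finally have drift_sum: "(\<Sum>t<K. drift_weight (Suc t))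
      = gbar * (L * gbar)\<^sup>2 / 4 * (real K * (real K * (real K - 1)) - real (K + 1) * real K * (real K - 1) / 3)" .
  have "(\<Sum>t<K. layer_cost x t) = real K * (L * gbar\<^sup>2 * real K / 2 * (M / (real P * real Bbar)))
      + (\<Sum>t<K. drift_weight (Suc t)) * (M / real Bbar) + (\<Sum>t<K. grad_slack x t)"
    unfolding layer_cost_def by (simp add: sum.distrib sum_distrib_right sum_divide_distrib)
  also have "\<dots> = noise_cost + (\<Sum>t<K. grad_slack x t)"
    unfolding drift_sum noise_cost_def using K_real L_pos P_real Bbar_real
    by (simp add: field_simps power2_eq_square)
  finally show ?thesis .
qed

lemma round_descent_lyapunov:
  "F (round_map y n x) + gbar * (real K - (L * gbar)\<^sup>2) / 2 * (norm (gradF x))\<^sup>2 + (\<Sum>t<K. grad_slack x t)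
    \<le> F x + lyapunov y n x K"
proof -
  have "gbar * (real K - (L * gbar)\<^sup>2) / 2 * (norm (gradF x))\<^sup>2 + (\<Sum>t<K. grad_slack x t) = (norm (gradF x))\<^sup>2 / (2 * L)"
    unfolding sum_grad_slack using L_pos K_real by (simp add: field_simps power2_eq_square)
  then show ?thesis using round_descent[of y n x] unfolding lyapunov_K by linarith
qed

lemma round_expectation:
  assumes n: "1 \<le> n" and Fx: "F x \<ge> Fstar"
    and good: "AE \<omega> in \<Omega>. F (round_map (sample_path \<omega>) n x) \<ge> Fstar"
  shows "(\<integral>\<^sup>+\<omega>. ennreal (F (round_map (sample_path \<omega>) n x) - Fstar + gbar * (real K - (L * gbar)\<^sup>2) / 2 * (norm (gradF x))\<^sup>2) \<partial>\<Omega>)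
         \<le> ennreal (F x - Fstar + noise_cost)"
proof -
  define c where "c = gbar * (real K - (L * gbar)\<^sup>2) / 2 * (norm (gradF x))\<^sup>2"
  define S where "S = (\<Sum>t<K. grad_slack x t)"
  have c_nonneg: "0 \<le> c"
  proof -
    have "(L * gbar)\<^sup>2 \<le> 1" using cond2 delta by (simp add: power_mult_distrib)
    then show ?thesis unfolding c_def using K_real gbar_pos by (intro mult_nonneg_nonneg) auto
  qed
  have S_nonneg: "0 \<le> S" unfolding S_def using grad_slack_nonneg by (intro sum_nonneg) auto
  have pathwise: "ennreal (F (round_map (sample_path \<omega>) n x) - Fstar + c) + ennreal S
      \<le> ennreal (F x - Fstar) + ennreal (lyapunov (sample_path \<omega>) n x K)"
    if "F (round_map (sample_path \<omega>) n x) \<ge> Fstar" for \<omega>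
    using that Fx c_nonneg S_nonneg round_descent_lyapunov[of "sample_path \<omega>" n x] lyapunov_nonneg[of K]
    unfolding c_def S_def by (simp add: ennreal_plus[symmetric] ennreal_leI del: ennreal_plus)
  have [measurable]: "(\<lambda>\<omega>. F (round_map (sample_path \<omega>) n x)) \<in> borel_measurable \<Omega>"
    using borel_measurable_continuous_on[OF continuous_F measurable_round_map_sample[OF n]] .
  have [measurable]: "(\<lambda>\<omega>. lyapunov (sample_path \<omega>) n x K) \<in> borel_measurable \<Omega>"
    using measurable_lyapunov[OF samples_measurable_sample[OF n]] by simp
  have "(\<integral>\<^sup>+\<omega>. ennreal (F (round_map (sample_path \<omega>) n x) - Fstar + c) \<partial>\<Omega>) + ennreal S
      = (\<integral>\<^sup>+\<omega>. ennreal (F (round_map (sample_path \<omega>) n x) - Fstar + c) + ennreal S \<partial>\<Omega>)"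
    by (simp add: nn_integral_add)
  also have "\<dots> \<le> (\<integral>\<^sup>+\<omega>. ennreal (F x - Fstar) + ennreal (lyapunov (sample_path \<omega>) n x K) \<partial>\<Omega>)"
    using good by (intro nn_integral_mono_AE) (auto elim!: eventually_mono intro: pathwise)
  also have "\<dots> = ennreal (F x - Fstar) + (\<integral>\<^sup>+\<omega>. ennreal (lyapunov (sample_path \<omega>) n x K) \<partial>\<Omega>)"
    by (simp add: nn_integral_add)
  also have "\<dots> \<le> ennreal (F x - Fstar) + ennreal (\<Sum>t<K. layer_cost x t)"
    by (intro add_left_mono lyapunov_expectation[OF n]) simp
  also have "\<dots> = ennreal (F x - Fstar + noise_cost + S)"
    using Fx noise_cost_nonneg S_nonneg unfolding sum_layer_cost S_def
    by (simp add: ennreal_plus[symmetric] add.assoc del: ennreal_plus)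
  finally have "(\<integral>\<^sup>+\<omega>. ennreal (F (round_map (sample_path \<omega>) n x) - Fstar + c) \<partial>\<Omega>) \<le> ennreal (F x - Fstar + noise_cost + S - S)"
    using S_nonneg by (rule ennreal_le_diff_of_add_le)
  then show ?thesis unfolding c_def by simp
qed

section \<open>Telescoping over the rounds\<close>

definition grad_sq_sum :: "(kavg_index \<Rightarrow> 'x) \<Rightarrow> 'a \<Rightarrow> nat \<Rightarrow> real" where
  "grad_sq_sum y w1 m = (\<Sum>n<m. (norm (gradF (avg_iter y w1 n)))\<^sup>2)"

lemma grad_sq_sum_nonneg: "grad_sq_sum y w1 m \<ge> 0"
  unfolding grad_sq_sum_def by (simp add: sum_nonneg)

lemma measurable_avg_iter_functionals:
  assumes "\<And>i. i \<in> sample_index \<Longrightarrow> fst i \<le> m \<Longrightarrow> (\<lambda>z. Yf z i) \<in> measurable N D"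
  shows "(\<lambda>z. F (avg_iter (Yf z) w1 m)) \<in> borel_measurable N"
    and "(\<lambda>z. gradF (avg_iter (Yf z) w1 m)) \<in> borel_measurable N"
    and "(\<lambda>z. grad_sq_sum (Yf z) w1 m) \<in> borel_measurable N"
proof -
  have avg: "(\<lambda>z. avg_iter (Yf z) w1 n) \<in> borel_measurable N" if "n \<le> m" for n
    using assms that by (intro measurable_avg_iter) auto
  show "(\<lambda>z. F (avg_iter (Yf z) w1 m)) \<in> borel_measurable N"
    using borel_measurable_continuous_on[OF continuous_F avg] by simp
  have grad: "(\<lambda>z. gradF (avg_iter (Yf z) w1 n)) \<in> borel_measurable N" if "n \<le> m" for n
    using borel_measurable_continuous_on[OF continuous_gradF avg[OF that]] .
  then show "(\<lambda>z. gradF (avg_iter (Yf z) w1 m)) \<in> borel_measurable N" by simp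
  have "(\<lambda>z. (norm (gradF (avg_iter (Yf z) w1 n)))\<^sup>2) \<in> borel_measurable N" if "n < m" for n
    using grad[of n] that by (simp add: borel_measurable_power borel_measurable_norm)
  then show "(\<lambda>z. grad_sq_sum (Yf z) w1 m) \<in> borel_measurable N"
    unfolding grad_sq_sum_def by (intro borel_measurable_sum) auto
qed

lemma measurable_sample_path_functionals [measurable]:
  "(\<lambda>\<omega>. F (avg_iter (sample_path \<omega>) w1 m)) \<in> borel_measurable \<Omega>"
  "(\<lambda>\<omega>. grad_sq_sum (sample_path \<omega>) w1 m) \<in> borel_measurable \<Omega>"
  by (intro measurable_avg_iter_functionals measurable_sample; simp)+

definition rounds_upto :: "nat \<Rightarrow> (kavg_index) set" where
  "rounds_upto m = {i \<in> sample_index. fst i \<le> m}"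

definition round_indices :: "nat \<Rightarrow> (kavg_index) set" where
  "round_indices m = {i \<in> sample_index. fst i = m}"

lemma avg_iter_splice_past: "n \<le> m \<Longrightarrow> avg_iter (splice (rounds_upto m) y y') w1 n = avg_iter y w1 n"
  by (intro avg_iter_cong) (auto simp: rounds_upto_def splice_def)

lemma avg_iter_splice_Suc:
  "avg_iter (splice (rounds_upto m) y y') w1 (Suc m) = round_map y' (Suc m) (avg_iter y w1 m)"
  unfolding avg_iter_Suc avg_iter_splice_past[OF order_refl]
  by (intro round_map_cong) (auto simp: rounds_upto_def splice_def)

lemma avg_iter_cong_rounds:
  "(\<And>i. i \<in> rounds_upto m \<union> round_indices (Suc m) \<Longrightarrow> y i = y' i) \<Longrightarrow> n \<le> Suc m
    \<Longrightarrow> avg_iter y w1 n = avg_iter y' w1 n"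
  by (intro avg_iter_cong) (auto simp: rounds_upto_def round_indices_def le_Suc_eq)

lemma measurable_splice_rounds:
  "i \<in> sample_index \<Longrightarrow> fst i \<le> Suc m \<Longrightarrow>
    (\<lambda>z. splice (rounds_upto m) (fst z) (snd z) i)
      \<in> measurable (PiM (rounds_upto m) (\<lambda>_. D) \<Otimes>\<^sub>M PiM (round_indices (Suc m)) (\<lambda>_. D)) D"
  by (intro measurable_splice) (auto simp: rounds_upto_def round_indices_def)

text \<open>The samples of round \<open>m + 1\<close> are independent of those of the earlier rounds, so the
  expectation splits into an inner integral over round \<open>m + 1\<close> with the past frozen, to which
  \<open>round_expectation\<close> applies.\<close>

lemma expected_round_step:
  assumes lower: "\<And>\<omega> m. \<omega> \<in> space \<Omega> \<Longrightarrow> F (avg_iter (sample_path \<omega>) w1 m) \<ge> Fstar"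
    and c: "0 \<le> c"
  shows "(\<integral>\<^sup>+\<omega>. ennreal (F (avg_iter (sample_path \<omega>) w1 (Suc m)) - Fstar
              + gbar * (real K - (L * gbar)\<^sup>2) / 2 * (norm (gradF (avg_iter (sample_path \<omega>) w1 m)))\<^sup>2)
            + ennreal (c * grad_sq_sum (sample_path \<omega>) w1 m) \<partial>\<Omega>)
       \<le> (\<integral>\<^sup>+\<omega>. ennreal (F (avg_iter (sample_path \<omega>) w1 m) - Fstar + noise_cost)
            + ennreal (c * grad_sq_sum (sample_path \<omega>) w1 m) \<partial>\<Omega>)"
proof -
  let ?A = "rounds_upto m" and ?B = "round_indices (Suc m)"
  let ?Y = "\<lambda>\<omega> \<omega>'. splice ?A (sample_path \<omega>) (sample_path \<omega>')"
  define \<Phi> where "\<Phi> y = ennreal (F (avg_iter y w1 (Suc m)) - Fstar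
      + gbar * (real K - (L * gbar)\<^sup>2) / 2 * (norm (gradF (avg_iter y w1 m)))\<^sup>2)
      + ennreal (c * grad_sq_sum y w1 m)" for y
  have AB: "?A \<inter> ?B = {}" "?A \<subseteq> sample_index" "?B \<subseteq> sample_index"
    unfolding rounds_upto_def round_indices_def by auto
  note m = measurable_avg_iter_functionals[where Yf="\<lambda>z. splice ?A (fst z) (snd z)", OF measurable_splice_rounds]
  have \<Phi>_meas: "(\<lambda>z. \<Phi> (splice ?A (fst z) (snd z))) \<in> borel_measurable (PiM ?A (\<lambda>_. D) \<Otimes>\<^sub>M PiM ?B (\<lambda>_. D))"
    unfolding \<Phi>_def using m(1)[of "Suc m"] m(2,3)[of m] by measurable
  have \<Phi>_cong: "\<Phi> y = \<Phi> y'" if "\<And>i. i \<in> ?A \<union> ?B \<Longrightarrow> y i = y' i" for y y'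
    unfolding \<Phi>_def grad_sq_sum_def using avg_iter_cong_rounds[OF that] by simp
  have good: "AE \<omega> in \<Omega>. AE \<omega>' in \<Omega>. Fstar \<le> F (round_map (sample_path \<omega>') (Suc m) (avg_iter (sample_path \<omega>) w1 m))"
  proof -
    have "AE \<omega> in \<Omega>. AE \<omega>' in \<Omega>. Fstar \<le> F (avg_iter (?Y \<omega> \<omega>') w1 (Suc m))"
    proof (rule AE_splice[OF AB])
      show "{z \<in> space (PiM ?A (\<lambda>_. D) \<Otimes>\<^sub>M PiM ?B (\<lambda>_. D)). Fstar \<le> F (avg_iter (splice ?A (fst z) (snd z)) w1 (Suc m))}
          \<in> sets (PiM ?A (\<lambda>_. D) \<Otimes>\<^sub>M PiM ?B (\<lambda>_. D))"
        using m(1)[of "Suc m"] by measurable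
      show "(Fstar \<le> F (avg_iter y w1 (Suc m))) = (Fstar \<le> F (avg_iter y' w1 (Suc m)))"
        if "\<And>i. i \<in> ?A \<union> ?B \<Longrightarrow> y i = y' i" for y y'
        using avg_iter_cong_rounds[OF that order_refl] by simp
    qed (use lower in auto)
    then show ?thesis unfolding avg_iter_splice_Suc .
  qed
  have inner: "(\<integral>\<^sup>+\<omega>'. \<Phi> (?Y \<omega> \<omega>') \<partial>\<Omega>)
      \<le> ennreal (F (avg_iter (sample_path \<omega>) w1 m) - Fstar + noise_cost) + ennreal (c * grad_sq_sum (sample_path \<omega>) w1 m)"
    if \<omega>: "\<omega> \<in> space \<Omega>"
      and good\<omega>: "AE \<omega>' in \<Omega>. Fstar \<le> F (round_map (sample_path \<omega>') (Suc m) (avg_iter (sample_path \<omega>) w1 m))"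
    for \<omega>
  proof -
    define x where "x = avg_iter (sample_path \<omega>) w1 m"
    have "(\<integral>\<^sup>+\<omega>'. \<Phi> (?Y \<omega> \<omega>') \<partial>\<Omega>)
        = (\<integral>\<^sup>+\<omega>'. ennreal (F (round_map (sample_path \<omega>') (Suc m) x) - Fstar
            + gbar * (real K - (L * gbar)\<^sup>2) / 2 * (norm (gradF x))\<^sup>2) \<partial>\<Omega>)
          + ennreal (c * grad_sq_sum (sample_path \<omega>) w1 m)"
      unfolding \<Phi>_def grad_sq_sum_def avg_iter_splice_Suc avg_iter_splice_past[OF order_refl]
      using borel_measurable_continuous_on[OF continuous_F measurable_round_map_sample[of "Suc m" x]]
      by (subst nn_integral_add) (auto simp: avg_iter_splice_past x_def)
    also have "\<dots> \<le> ennreal (F x - Fstar + noise_cost) + ennreal (c * grad_sq_sum (sample_path \<omega>) w1 m)"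
      using good\<omega> lower[OF \<omega>, of m] unfolding x_def by (intro add_right_mono round_expectation) auto
    finally show ?thesis unfolding x_def .
  qed
  have "(\<integral>\<^sup>+\<omega>. \<Phi> (sample_path \<omega>) \<partial>\<Omega>) = (\<integral>\<^sup>+\<omega>. (\<integral>\<^sup>+\<omega>'. \<Phi> (?Y \<omega> \<omega>') \<partial>\<Omega>) \<partial>\<Omega>)"
    by (rule nn_integral_splice[OF AB \<Phi>_meas \<Phi>_cong])
  also have "\<dots> \<le> (\<integral>\<^sup>+\<omega>. ennreal (F (avg_iter (sample_path \<omega>) w1 m) - Fstar + noise_cost)
        + ennreal (c * grad_sq_sum (sample_path \<omega>) w1 m) \<partial>\<Omega>)"
  proof (rule nn_integral_mono_AE)
    show "AE \<omega> in \<Omega>. (\<integral>\<^sup>+\<omega>'. \<Phi> (?Y \<omega> \<omega>') \<partial>\<Omega>)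
        \<le> ennreal (F (avg_iter (sample_path \<omega>) w1 m) - Fstar + noise_cost) + ennreal (c * grad_sq_sum (sample_path \<omega>) w1 m)"
      using good AE_space by eventually_elim (use inner in auto)
  qed
  finally show ?thesis unfolding \<Phi>_def .
qed

lemma F_start_ge:
  assumes "\<And>\<omega> m. \<omega> \<in> space \<Omega> \<Longrightarrow> F (avg_iter (sample_path \<omega>) w1 m) \<ge> Fstar"
  shows "F w1 \<ge> Fstar"
proof -
  obtain \<omega> where "\<omega> \<in> space \<Omega>" using prob_space.not_empty[OF prob] by auto
  from assms[OF this, of 0] show ?thesis by simp
qed

lemma potential_Suc_le:
  assumes F_ge: "Fstar \<le> F (avg_iter y w1 (Suc m))" and c: "0 \<le> c" "c \<le> r"
  shows "ennreal (F (avg_iter y w1 (Suc m)) - Fstar) + ennreal (c * grad_sq_sum y w1 (Suc m))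
    \<le> ennreal (F (avg_iter y w1 (Suc m)) - Fstar + r * (norm (gradF (avg_iter y w1 m)))\<^sup>2)
      + ennreal (c * grad_sq_sum y w1 m)"
proof -
  define g2 where "g2 = (norm (gradF (avg_iter y w1 m)))\<^sup>2"
  have S: "0 \<le> c * grad_sq_sum y w1 m" using c grad_sq_sum_nonneg by simp
  have "ennreal (F (avg_iter y w1 (Suc m)) - Fstar) + ennreal (c * grad_sq_sum y w1 (Suc m))
      = ennreal (F (avg_iter y w1 (Suc m)) - Fstar + c * g2 + c * grad_sq_sum y w1 m)"
    using F_ge S c unfolding g2_def grad_sq_sum_def
    by (simp add: ennreal_plus[symmetric] algebra_simps del: ennreal_plus)
  also have "\<dots> \<le> ennreal (F (avg_iter y w1 (Suc m)) - Fstar + r * g2 + c * grad_sq_sum y w1 m)"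
    using c unfolding g2_def by (intro ennreal_leI add_mono mult_right_mono order_refl) auto
  also have "\<dots> = ennreal (F (avg_iter y w1 (Suc m)) - Fstar + r * g2) + ennreal (c * grad_sq_sum y w1 m)"
    using F_ge S c unfolding g2_def by (intro ennreal_plus) auto
  finally show ?thesis unfolding g2_def .
qed

text \<open>The weight \<open>\<gamma>(K - 1 + \<delta>)/2\<close> of the accumulated squared gradients is at most the
  descent rate \<open>\<gamma>(K - (L\<gamma>)\<^sup>2)/2\<close> of \<open>round_expectation\<close> by the second step-size condition.\<close>

lemma expected_potential_bound:
  assumes lower: "\<And>\<omega> m. \<omega> \<in> space \<Omega> \<Longrightarrow> F (avg_iter (sample_path \<omega>) w1 m) \<ge> Fstar"
  shows "(\<integral>\<^sup>+\<omega>. ennreal (F (avg_iter (sample_path \<omega>) w1 m) - Fstar)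
            + ennreal (gbar * (real K - 1 + \<delta>) / 2 * grad_sq_sum (sample_path \<omega>) w1 m) \<partial>\<Omega>)
         \<le> ennreal (F w1 - Fstar + real m * noise_cost)"
proof (induction m)
  case 0
  then show ?case by (simp add: grad_sq_sum_def)
next
  case (Suc m)
  define c where "c = gbar * (real K - 1 + \<delta>) / 2"
  have c_nonneg: "0 \<le> c" unfolding c_def using K_real delta gbar_pos by simp
  have c_le: "c \<le> gbar * (real K - (L * gbar)\<^sup>2) / 2"
    unfolding c_def using cond2 gbar_pos by (simp add: power_mult_distrib)
  have F_w1: "F w1 \<ge> Fstar" using lower by (rule F_start_ge)
  let ?Y = "\<lambda>\<omega>. avg_iter (sample_path \<omega>) w1"
  have "(\<integral>\<^sup>+\<omega>. ennreal (F (?Y \<omega> (Suc m)) - Fstar) + ennreal (c * grad_sq_sum (sample_path \<omega>) w1 (Suc m)) \<partial>\<Omega>)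
      \<le> (\<integral>\<^sup>+\<omega>. ennreal (F (?Y \<omega> (Suc m)) - Fstar + gbar * (real K - (L * gbar)\<^sup>2) / 2 * (norm (gradF (?Y \<omega> m)))\<^sup>2)
          + ennreal (c * grad_sq_sum (sample_path \<omega>) w1 m) \<partial>\<Omega>)"
    using lower c_nonneg c_le by (intro nn_integral_mono potential_Suc_le) auto
  also have "\<dots> \<le> (\<integral>\<^sup>+\<omega>. ennreal (F (?Y \<omega> m) - Fstar + noise_cost) + ennreal (c * grad_sq_sum (sample_path \<omega>) w1 m) \<partial>\<Omega>)"
    by (rule expected_round_step[OF lower c_nonneg])
  also have "\<dots> = (\<integral>\<^sup>+\<omega>. ennreal (F (?Y \<omega> m) - Fstar) + ennreal (c * grad_sq_sum (sample_path \<omega>) w1 m) \<partial>\<Omega>)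
      + ennreal noise_cost"
  proof -
    have "(\<integral>\<^sup>+\<omega>. ennreal (F (?Y \<omega> m) - Fstar + noise_cost) + ennreal (c * grad_sq_sum (sample_path \<omega>) w1 m) \<partial>\<Omega>)
        = (\<integral>\<^sup>+\<omega>. (ennreal (F (?Y \<omega> m) - Fstar) + ennreal (c * grad_sq_sum (sample_path \<omega>) w1 m)) + ennreal noise_cost \<partial>\<Omega>)"
      using lower noise_cost_nonneg
      by (intro nn_integral_cong) (simp add: ennreal_plus[symmetric] add_ac del: ennreal_plus)
    then show ?thesis
      by (simp add: nn_integral_add)
  qed
  also have "\<dots> \<le> ennreal (F w1 - Fstar + real m * noise_cost) + ennreal noise_cost"
    using Suc.IH unfolding c_def by (intro add_right_mono) simp
  also have "\<dots> = ennreal (F w1 - Fstar + real m * noise_cost + noise_cost)"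
    using F_w1 noise_cost_nonneg by (intro ennreal_plus[symmetric]) auto
  also have "\<dots> = ennreal (F w1 - Fstar + real (Suc m) * noise_cost)"
    by (simp add: algebra_simps)
  finally show ?case unfolding c_def .
qed

lemma average_grad_norm_bound:
  assumes lower: "\<And>\<omega> m. \<omega> \<in> space \<Omega> \<Longrightarrow> F (avg_iter (sample_path \<omega>) w1 m) \<ge> Fstar"
    and N: "1 \<le> N"
  shows "(\<integral>\<^sup>+\<omega>. ennreal ((1 / real N) * grad_sq_sum (sample_path \<omega>) w1 N) \<partial>\<Omega>)
    \<le> ennreal (2 * (F w1 - Fstar) / (real N * (real K - 1 + \<delta>) * gbar)
             + L * real K * gbar * M / (real Bbar * (real K - 1 + \<delta>))
               * (real K / real P + L * (2 * real K - 1) * (real K - 1) * gbar / 6))"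
proof -
  define D0 where "D0 = real K - 1 + \<delta>"
  define c where "c = gbar * D0 / 2"
  have D0_pos: "0 < D0" unfolding D0_def using K_real delta by simp
  have c_pos: "0 < c" unfolding c_def using D0_pos gbar_pos by simp
  have N_pos: "0 < real N" using N by simp
  have F_w1: "F w1 \<ge> Fstar" using lower by (rule F_start_ge)
  have "(\<integral>\<^sup>+\<omega>. ennreal ((1 / real N) * grad_sq_sum (sample_path \<omega>) w1 N) \<partial>\<Omega>)
      \<le> (\<integral>\<^sup>+\<omega>. ennreal (1 / (real N * c)) * (ennreal (F (avg_iter (sample_path \<omega>) w1 N) - Fstar)
          + ennreal (c * grad_sq_sum (sample_path \<omega>) w1 N)) \<partial>\<Omega>)"
  proof (rule nn_integral_mono)
    fix \<omega>
    have "ennreal ((1 / real N) * grad_sq_sum (sample_path \<omega>) w1 N)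
        = ennreal (1 / (real N * c)) * ennreal (c * grad_sq_sum (sample_path \<omega>) w1 N)"
      using c_pos N_pos grad_sq_sum_nonneg by (simp add: ennreal_mult[symmetric])
    also have "\<dots> \<le> ennreal (1 / (real N * c)) * (ennreal (F (avg_iter (sample_path \<omega>) w1 N) - Fstar)
        + ennreal (c * grad_sq_sum (sample_path \<omega>) w1 N))"
      by (intro mult_left_mono) auto
    finally show "ennreal ((1 / real N) * grad_sq_sum (sample_path \<omega>) w1 N) \<le> \<dots>" .
  qed
  also have "\<dots> = ennreal (1 / (real N * c)) * (\<integral>\<^sup>+\<omega>. ennreal (F (avg_iter (sample_path \<omega>) w1 N) - Fstar)
      + ennreal (c * grad_sq_sum (sample_path \<omega>) w1 N) \<partial>\<Omega>)"
    by (intro nn_integral_cmult) measurable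
  also have "\<dots> \<le> ennreal (1 / (real N * c)) * ennreal (F w1 - Fstar + real N * noise_cost)"
    using expected_potential_bound[OF lower, of N] unfolding c_def D0_def by (intro mult_left_mono) auto
  also have "\<dots> = ennreal (1 / (real N * c) * (F w1 - Fstar + real N * noise_cost))"
    using c_pos N_pos F_w1 noise_cost_nonneg by (intro ennreal_mult[symmetric]) auto
  also have "\<dots> = ennreal ((F w1 - Fstar + real N * noise_cost) / (real N * c))"
    by simp
  also have "(F w1 - Fstar + real N * noise_cost) / (real N * c)
      = 2 * (F w1 - Fstar) / (real N * (real K - 1 + \<delta>) * gbar) + 2 * noise_cost / (gbar * (real K - 1 + \<delta>))"
    using N_pos gbar_pos D0_pos unfolding c_def D0_def[symmetric] by (simp add: field_simps)
  also have "2 * noise_cost / (gbar * (real K - 1 + \<delta>))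
      = L * real K * gbar * M / (real Bbar * (real K - 1 + \<delta>))
          * (real K / real P + L * (2 * real K - 1) * (real K - 1) * gbar / 6)"
    using gbar_pos Bbar_real D0_pos unfolding noise_cost_def D0_def[symmetric]
    by (simp add: field_simps power2_eq_square)
  finally show ?thesis .
qed

end

theorem theorem1:
  fixes F :: "'a::euclidean_space \<Rightarrow> real"
    and gradF :: "'a \<Rightarrow> 'a"
    and L M Fstar gbar \<delta> :: real
    and P K Bbar N :: nat
    and D :: "'x measure"
    and G :: "'a \<Rightarrow> 'x \<Rightarrow> 'a"
    and M\<^sub>\<Omega> :: "'b measure"
    and xi :: "nat \<Rightarrow> nat \<Rightarrow> nat \<Rightarrow> nat \<Rightarrow> 'b \<Rightarrow> 'x"
    and w1 :: 'a
    and U :: "'a set"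
  assumes deriv: "\<And>w. (F has_derivative (\<lambda>h. gradF w \<bullet> h)) (at w)"
    and L_pos: "L > 0"
    and lipschitz: "\<And>w w'. norm (gradF w - gradF w') \<le> L * norm (w - w')"
    and D_prob: "prob_space D"
    and G_meas: "(\<lambda>(w, x). G w x) \<in> borel_measurable (borel \<Otimes>\<^sub>M D)"
    and G_int: "\<And>w. integrable D (G w)"
    and G_sq_int: "\<And>w. integrable D (\<lambda>x. (norm (G w x))\<^sup>2)"
    and unbiased: "\<And>w. (\<integral>x. G w x \<partial>D) = gradF w"
    and M_nonneg: "M \<ge> 0"
    and variance: "\<And>w. (\<integral>x. (norm (G w x))\<^sup>2 \<partial>D) - (norm (\<integral>x. G w x \<partial>D))\<^sup>2 \<le> M"
    and P_pos: "P \<ge> 1" and K_pos: "K \<ge> 1"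
    and gbar_pos: "gbar > 0" and Bbar_pos: "Bbar \<ge> 1"
    and prob: "prob_space M\<^sub>\<Omega>"
    and xi_meas: "\<And>n j k s. 1 \<le> n \<Longrightarrow> j \<in> {1..P} \<Longrightarrow> k \<in> {1..K} \<Longrightarrow> s \<in> {1..Bbar} \<Longrightarrow>
        xi n j k s \<in> measurable M\<^sub>\<Omega> D"
    and xi_indep: "prob_space.indep_vars M\<^sub>\<Omega> (\<lambda>_. D) (\<lambda>(n, j, k, s). xi n j k s)
                     {(n, j, k, s). 1 \<le> n \<and> j \<in> {1..P} \<and> k \<in> {1..K} \<and> s \<in> {1..Bbar}}"
    and xi_distr: "\<And>n j k s. 1 \<le> n \<Longrightarrow> j \<in> {1..P} \<Longrightarrow> k \<in> {1..K} \<Longrightarrow> s \<in> {1..Bbar} \<Longrightarrow>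
        distr M\<^sub>\<Omega> D (xi n j k s) = D"
    and U_open: "open U"
    and F_lower: "\<And>w. w \<in> U \<Longrightarrow> F w \<ge> Fstar"
    and iterates_in_U: "\<And>\<omega> n j k. \<omega> \<in> space M\<^sub>\<Omega> \<Longrightarrow> n \<ge> 1 \<Longrightarrow> j \<in> {1..P} \<Longrightarrow> k \<le> K \<Longrightarrow>
        kavg_local G (\<lambda>_. gbar) (\<lambda>_. Bbar) xi n j
          (kavg_tilde G (\<lambda>_. gbar) (\<lambda>_. Bbar) xi P K w1 n \<omega>) k \<omega> \<in> U"
    and delta: "0 < \<delta>" "\<delta> < 1"
    and cond1: "1 \<ge> L\<^sup>2 * gbar\<^sup>2 * (real K + 1) * (real K - 2) / 2 + L * gbar * real K"
    and cond2: "1 - \<delta> \<ge> L\<^sup>2 * gbar\<^sup>2"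
    and N_pos: "N \<ge> 1"
  shows "(\<integral>\<^sup>+ \<omega>. ennreal ((1 / real N) *
            (\<Sum>j=1..N. (norm (gradF (kavg_tilde G (\<lambda>_. gbar) (\<lambda>_. Bbar) xi P K w1 j \<omega>)))\<^sup>2)) \<partial>M\<^sub>\<Omega>)
         \<le> ennreal (2 * (F w1 - Fstar) / (real N * (real K - 1 + \<delta>) * gbar)
             + L * real K * gbar * M / (real Bbar * (real K - 1 + \<delta>))
               * (real K / real P + L * (2 * real K - 1) * (real K - 1) * gbar / 6))"
proof -
  interpret kavg F gradF L M gbar P K Bbar D G "M\<^sub>\<Omega>" xi \<delta>
    by (rule kavg.intro) fact+
  have lower: "F (avg_iter (sample_path \<omega>) w1 m) \<ge> Fstar" if \<omega>: "\<omega> \<in> space M\<^sub>\<Omega>" for \<omega> m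
  proof -
    have "kavg_local G (\<lambda>_. gbar) (\<lambda>_. Bbar) xi (Suc m) 1
          (kavg_tilde G (\<lambda>_. gbar) (\<lambda>_. Bbar) xi P K w1 (Suc m) \<omega>) 0 \<omega> \<in> U"
      by (rule iterates_in_U) (use \<omega> P_pos in auto)
    then have "avg_iter (sample_path \<omega>) w1 m \<in> U"
      by (simp add: kavg_tilde_def kavg_aux_eq)
    then show ?thesis by (rule F_lower)
  qed
  have eq: "(\<Sum>j=1..N. (norm (gradF (kavg_tilde G (\<lambda>_. gbar) (\<lambda>_. Bbar) xi P K w1 j \<omega>)))\<^sup>2)
      = grad_sq_sum (sample_path \<omega>) w1 N" for \<omega>
    by (simp add: sum.atLeast1_atMost_eq kavg_tilde_def kavg_aux_eq grad_sq_sum_def)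
  show ?thesis
    unfolding eq using average_grad_norm_bound[OF lower N_pos] by simp
qed

end
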